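(* Suppose every density in $\mathcal F$ (including the noise density $N$) is Gaussian. Then for every independent meeting pattern, every assignment of densities, every sensor $a$ and every round $t$, $$\mathrm{var}(X_a(t,\mathrm{ALG}))=V^{\mathrm{opt}}_a(t).$$
   Context: Model. Fix a finite set $\mathcal F$ of smooth probability densities on $\mathbb R$, each with mean zero and finite variance; a density $\Phi$ is smooth if $\Phi(x)>0$ for all $x\in\mathbb R$, $\Phi'$ exists, and $J_\Phi:=\int_{\mathbb R}\Phi'(y)^2/\Phi(y)\,dy<\infty$. One element $N\in\mathcal F$ is the noise density; $\mathrm{var}(N)$ is its variance. There are $n$ sensors; each sensor $a$ is assigned $\Phi_a\in\mathcal F$. An unknown $\tau^*\in\mathbb R$ is fixed, and the initial opinions $X_a(0)$ are independent, $X_a(0)$ having density $\Phi_a(x-\tau^* )$. Rounds are $t=0,1,2,\dots$. A meeting pattern $\mathcal P$ specifies in advance, for each round $t$ and each sensor $a$, at most one other sensor $b$ that $a$ observes at round $t$. When $a$ observes $b$ at round $t$, $a$ obtains $\tilde d_{ab}(t)=X_b(t)-X_a(t)+\eta$, where $X_c(t)$ denotes the current opinion of sensor $c$ and $\eta$ has density $N$ and is independent of everything else (fresh noise for each observation). Relevant sets: $R_a(0)=\{a\}$; $R_a(t+1)=R_a(t)\cup R_b(t)$ if $a$ observes $b$ at round $t$, and $R_a(t+1)=R_a(t)$ otherwise. $\mathcal P$ is independent if whenever $a$ observes $b$ at round $t$, $R_a(t)\cap R_b(t)=\emptyset$. Information of a sensor. Histories: $H_a(0)=\emptyset$; if $a$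 observes $b$ at round $t$ then $H_a(t+1)=H_a(t)\cup H_b(t)\cup\{(a,b,t)\}$, otherwise $H_a(t+1)=H_a(t)$. For an observation event $e=(c,d,s)$ with noise $\eta_e$, set $D_e=X_d(0)-X_c(0)+\eta_e$. The information of $a$ at round $t$ is $M_a(t)=(X_a(0),(D_e)_{e\in H_a(t)})$. The optimal variance $V^{\mathrm{opt}}_a(t)$ is the infimum of $\mathrm{var}(\hat X)$ over all unbiased estimators $\hat X$ of $\tau^*$ that are measurable functions of $M_a(t)$ (possibly using auxiliary randomness independent of everything else). Algorithm ALG. Each sensor $a$ keeps an opinion $x_a$ and an accuracy $c_a$, with $x_a(0)=X_a(0)$ and $c_a(0)=1/\mathrm{var}(\Phi_a)$. If $a$ observes $b$ at round $t$, let $\hat c_b(t)=c_b(t)/(1+c_b(t)\,\mathrm{var}(N))$ and set $x_a(t+1)=x_a(t)+\tilde d_{ab}(t)\,\hat c_b(t)/(c_a(t)+\hat c_b(t))$ and $c_a(t+1)=c_a(t)+\hat c_b(t)$ (here $\tilde d_{ab}(t)=x_b(t)-x_a(t)+\eta$); otherwise $x_a(t+1)=x_a(t)$, $c_a(t+1)=c_a(t)$. $X_a(t,\mathrm{ALG})$ is the random variable $x_a(t)$. *)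

theory Defs
  imports "HOL-Probability.Probability"
begin

text \<open>Sensors are the elements of a finite type 's. A meeting pattern is a map
  P :: nat => 's => 's option; P t a = Some b means that a observes b at round t.\<close>

definition meeting_pattern :: "(nat \<Rightarrow> 's \<Rightarrow> 's option) \<Rightarrow> bool" where
  "meeting_pattern P \<longleftrightarrow> (\<forall>t a. P t a \<noteq> Some a)"

primrec relevant :: "(nat \<Rightarrow> 's \<Rightarrow> 's option) \<Rightarrow> nat \<Rightarrow> 's \<Rightarrow> 's set" where
  "relevant P 0 = (\<lambda>a. {a})"
| "relevant P (Suc t) = (\<lambda>a. case P t a of
       None \<Rightarrow> relevant P t a
     | Some b \<Rightarrow> relevant P t a \<union> relevant P t b)"

definition independent_pattern :: "(nat \<Rightarrow> 's \<Rightarrow> 's option) \<Rightarrow> bool" where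
  "independent_pattern P \<longleftrightarrow>
     (\<forall>t a b. P t a = Some b \<longrightarrow> relevant P t a \<inter> relevant P t b = {})"

primrec history :: "(nat \<Rightarrow> 's \<Rightarrow> 's option) \<Rightarrow> nat \<Rightarrow> 's \<Rightarrow> ('s \<times> 's \<times> nat) set" where
  "history P 0 = (\<lambda>a. {})"
| "history P (Suc t) = (\<lambda>a. case P t a of
       None \<Rightarrow> history P t a
     | Some b \<Rightarrow> history P t a \<union> history P t b \<union> {(a, b, t)})"

definition mvar :: "'a measure \<Rightarrow> ('a \<Rightarrow> real) \<Rightarrow> real" where
  "mvar M X = integral\<^sup>L M (\<lambda>x. (X x - integral\<^sup>L M X)\<^sup>2)"

definition dens_measure :: "(real \<Rightarrow> real) \<Rightarrow> real measure" where
  "dens_measure \<phi> = density lborel (\<lambda>x. ennreal (\<phi> x))"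

definition dvar :: "(real \<Rightarrow> real) \<Rightarrow> real" where
  "dvar \<phi> = mvar (dens_measure \<phi>) (\<lambda>x. x)"

text \<open>Underlying randomness up to round t: the initial opinions X_c(0) (one per
  sensor) and one noise variable eta(c,s) for the (unique, if any) observation made
  by sensor c at round s < t.\<close>
type_synonym 's omega = "('s \<Rightarrow> real) \<times> ('s \<times> nat \<Rightarrow> real)"

definition base :: "('s \<Rightarrow> real \<Rightarrow> real) \<Rightarrow> (real \<Rightarrow> real) \<Rightarrow> real \<Rightarrow> nat \<Rightarrow> 's omega measure" where
  "base \<Phi> N \<tau> t =
     (\<Pi>\<^sub>M c\<in>UNIV. dens_measure (\<lambda>x. \<Phi> c (x - \<tau>)))
       \<Otimes>\<^sub>M (\<Pi>\<^sub>M e\<in>UNIV \<times> {..<t}. dens_measure N)"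

definition Dobs :: "'s omega \<Rightarrow> ('s \<times> 's \<times> nat) \<Rightarrow> real" where
  "Dobs \<omega> e = (case e of (c, d, s) \<Rightarrow> fst \<omega> d - fst \<omega> c + snd \<omega> (c, s))"

definition info :: "(nat \<Rightarrow> 's \<Rightarrow> 's option) \<Rightarrow> 's \<Rightarrow> nat \<Rightarrow> 's omega
                     \<Rightarrow> real \<times> (('s \<times> 's \<times> nat) \<Rightarrow> real)" where
  "info P a t \<omega> = (fst \<omega> a, restrict (Dobs \<omega>) (history P t a))"

definition info_space :: "(nat \<Rightarrow> 's \<Rightarrow> 's option) \<Rightarrow> 's \<Rightarrow> nat
                           \<Rightarrow> (real \<times> (('s \<times> 's \<times> nat) \<Rightarrow> real)) measure" where
  "info_space P a t = (borel :: real measure) \<Otimes>\<^sub>M (\<Pi>\<^sub>M e\<in>history P t a. (borel :: real measure))"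

text \<open>A (possibly randomized) estimator based on M_a(t) is a Markov kernel K from
  the information space to the reals; its output distribution under parameter tau is
  the law of M_a(t) bound with K.\<close>
definition est_distr :: "('s \<Rightarrow> real \<Rightarrow> real) \<Rightarrow> (real \<Rightarrow> real) \<Rightarrow> (nat \<Rightarrow> 's \<Rightarrow> 's option)
     \<Rightarrow> 's \<Rightarrow> nat \<Rightarrow> (real \<times> (('s \<times> 's \<times> nat) \<Rightarrow> real) \<Rightarrow> real measure) \<Rightarrow> real \<Rightarrow> real measure" where
  "est_distr \<Phi> N P a t K \<tau> = distr (base \<Phi> N \<tau> t) (info_space P a t) (info P a t) \<bind> K"

definition unbiased_estimator :: "('s \<Rightarrow> real \<Rightarrow> real) \<Rightarrow> (real \<Rightarrow> real) \<Rightarrow> (nat \<Rightarrow> 's \<Rightarrow> 's option)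
     \<Rightarrow> 's \<Rightarrow> nat \<Rightarrow> (real \<times> (('s \<times> 's \<times> nat) \<Rightarrow> real) \<Rightarrow> real measure) \<Rightarrow> bool" where
  "unbiased_estimator \<Phi> N P a t K \<longleftrightarrow>
     K \<in> info_space P a t \<rightarrow>\<^sub>M prob_algebra (borel :: real measure) \<and>
     (\<forall>\<tau>. integrable (est_distr \<Phi> N P a t K \<tau>) (\<lambda>y. y) \<and>
          integral\<^sup>L (est_distr \<Phi> N P a t K \<tau>) (\<lambda>y. y) = \<tau>)"

text \<open>Optimal variance V^opt_a(t) at the true parameter tau (estimators of infinite
  variance do not affect the infimum and are omitted).\<close>
definition Vopt :: "('s \<Rightarrow> real \<Rightarrow> real) \<Rightarrow> (real \<Rightarrow> real) \<Rightarrow> (nat \<Rightarrow> 's \<Rightarrow> 's option)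
     \<Rightarrow> real \<Rightarrow> 's \<Rightarrow> nat \<Rightarrow> real" where
  "Vopt \<Phi> N P \<tau> a t =
     Inf {mvar (est_distr \<Phi> N P a t K \<tau>) (\<lambda>y. y) | K.
            unbiased_estimator \<Phi> N P a t K \<and>
            integrable (est_distr \<Phi> N P a t K \<tau>) (\<lambda>y. y\<^sup>2)}"

text \<open>Algorithm ALG: state (opinions x, accuracies c) after t rounds, as a function
  of the underlying randomness.\<close>
primrec alg :: "(nat \<Rightarrow> 's \<Rightarrow> 's option) \<Rightarrow> ('s \<Rightarrow> real \<Rightarrow> real) \<Rightarrow> (real \<Rightarrow> real)
     \<Rightarrow> 's omega \<Rightarrow> nat \<Rightarrow> ('s \<Rightarrow> real) \<times> ('s \<Rightarrow> real)" where
  "alg P \<Phi> N \<omega> 0 = (fst \<omega>, \<lambda>a. 1 / dvar (\<Phi> a))"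
| "alg P \<Phi> N \<omega> (Suc t) =
     (let x = fst (alg P \<Phi> N \<omega> t); c = snd (alg P \<Phi> N \<omega> t);
          ch = (\<lambda>b. c b / (1 + c b * dvar N))
      in (\<lambda>a. case P t a of None \<Rightarrow> x a
             | Some b \<Rightarrow> x a + (x b - x a + snd \<omega> (a, t)) * ch b / (c a + ch b),
          \<lambda>a. case P t a of None \<Rightarrow> c a | Some b \<Rightarrow> c a + ch b))"

definition X_alg :: "(nat \<Rightarrow> 's \<Rightarrow> 's option) \<Rightarrow> ('s \<Rightarrow> real \<Rightarrow> real) \<Rightarrow> (real \<Rightarrow> real)
     \<Rightarrow> 's \<Rightarrow> nat \<Rightarrow> 's omega \<Rightarrow> real" where
  "X_alg P \<Phi> N a t \<omega> = fst (alg P \<Phi> N \<omega> t) a"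

end

theory Submission
  imports Defs
begin

text \<open>For Gaussian densities the information \<open>M\<^sub>a(t)\<close> is a Gaussian location experiment in
  \<open>\<tau>\<close>. Its score is a linear combination of the centred initial opinions and of the noises, and
  because the meeting pattern is independent the relevant sets of two meeting sensors are disjoint,
  so the score coefficients of a and b have disjoint supports. Hence the Fisher information of
  \<open>M\<^sub>a(t)\<close> obeys exactly the recursion of ALG's accuracy \<open>c\<^sub>a(t)\<close>, and ALG's opinion is
  \<open>\<tau>\<close> plus the score divided by this accuracy: it is unbiased with variance \<open>1 / c\<^sub>a(t)\<close>.

  Conversely, translating the initial opinions and noises along the score coefficients leaves every
  observation \<open>D\<^sub>e\<close> of a unchanged and moves \<open>X\<^sub>a(0)\<close> by s, so on \<open>M\<^sub>a(t)\<close> it has the same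
  effect as replacing \<open>\<tau>\<close> by \<open>\<tau> + s\<close>; the Cameron--Martin formula then gives the likelihood
  ratio \<open>exp (s S - s\<^sup>2 I / 2)\<close>. The Hammersley--Chapman--Robbins inequality for this ratio,
  with s tending to 0, shows that no unbiased estimator has variance below \<open>1 / c\<^sub>a(t)\<close>.\<close>

lemma sum_UNIV_times_lessThan_Suc:
  assumes "\<And>c. f (c, t) = 0"
  shows "(\<Sum>e\<in>UNIV \<times> {..<Suc t}. f e) = (\<Sum>e\<in>(UNIV::'s::finite set) \<times> {..<t}. f e)"
  by (rule sum.mono_neutral_right) (use assms in \<open>auto simp: less_Suc_eq\<close>)

lemma sum_square_add_orthogonal:
  fixes f g w :: "'a \<Rightarrow> real"
  assumes "\<And>x. f x * g x = 0"
  shows "(\<Sum>x\<in>A. (f x + k * g x)\<^sup>2 / w x)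
    = (\<Sum>x\<in>A. (f x)\<^sup>2 / w x) + k\<^sup>2 * (\<Sum>x\<in>A. (g x)\<^sup>2 / w x)"
proof -
  have "(f x + k * g x)\<^sup>2 / w x = (f x)\<^sup>2 / w x + k\<^sup>2 * ((g x)\<^sup>2 / w x)" for x
    using assms[of x] by (simp add: power2_eq_square algebra_simps add_divide_distrib)
  then show ?thesis by (simp add: sum.distrib sum_distrib_left)
qed

lemma discounted_precision_eq:
  fixes c s :: real
  assumes "c > 0" "s > 0"
  shows "(1 / (1 + c * s))\<^sup>2 * c + (1 - 1 / (1 + c * s))\<^sup>2 / s = c / (1 + c * s)"
proof -
  define D where "D = 1 + c * s"
  have "D > 0" using assms by (simp add: D_def add_pos_nonneg)
  have "1 - 1 / D = c * s / D" using \<open>D > 0\<close> by (simp add: D_def field_simps)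
  then have "(1 - 1 / D)\<^sup>2 / s = c * (c * s) / D\<^sup>2"
    using assms by (simp add: power2_eq_square)
  moreover have "c / D\<^sup>2 + c * (c * s) / D\<^sup>2 = c * D / D\<^sup>2"
    by (simp add: D_def add_divide_distrib[symmetric] algebra_simps)
  moreover have "c * D / D\<^sup>2 = c / D"
    using \<open>D > 0\<close> by (simp add: power2_eq_square)
  ultimately show ?thesis by (simp add: D_def[symmetric] power_divide)
qed

lemma weighted_update_eq:
  fixes ca cb s k Sa Sb \<eta> \<tau> :: real
  assumes "ca > 0" "cb > 0" "s > 0" and k: "k = 1 / (1 + cb * s)"
  shows "(\<tau> + Sa / ca) + ((\<tau> + Sb / cb) - (\<tau> + Sa / ca) + \<eta>) * (cb * k / (ca + cb * k))
     = \<tau> + (Sa + k * Sb + (1 - k) * \<eta> / s) / (ca + cb * k)"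
proof -
  have "1 + cb * s > 0" using assms by (simp add: add_pos_nonneg)
  then have "k > 0" and "1 - k = cb * s * k" using assms by (simp_all add: k field_simps)
  then have "(1 - k) * \<eta> / s = cb * k * \<eta>" and "ca + cb * k > 0"
    using assms by (simp_all add: add_pos_pos)
  moreover have "Sa / ca + (Sb / cb - Sa / ca + \<eta>) * (cb * k / (ca + cb * k))
      = (Sa / ca * (ca + cb * k) + (Sb / cb - Sa / ca + \<eta>) * (cb * k)) / (ca + cb * k)"
    using \<open>ca + cb * k > 0\<close> by (simp add: field_simps)
  moreover have "Sa / ca * (ca + cb * k) + (Sb / cb - Sa / ca + \<eta>) * (cb * k) = Sa + k * Sb + cb * k * \<eta>"
    using \<open>ca > 0\<close> \<open>cb > 0\<close> by (simp add: field_simps)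
  ultimately show ?thesis by simp
qed

lemma self_in_relevant: "a \<in> relevant P t a"
  by (induction t arbitrary: a) (auto split: option.split)

lemma finite_history: "finite (history P t a)"
  by (induction t arbitrary: a) (auto split: option.split)

lemma history_subset_relevant:
  "(c, d, r) \<in> history P t a \<Longrightarrow> c \<in> relevant P t a \<and> d \<in> relevant P t a \<and> r < t"
proof (induction t arbitrary: a)
  case (Suc t)
  show ?case
  proof (cases "P t a")
    case (Some b)
    then show ?thesis
      using Suc.prems Suc.IH[of a] Suc.IH[of b] self_in_relevant[of a P t] self_in_relevant[of b P t]
      by auto
  qed (use Suc.prems Suc.IH[of a] in auto)
qed simp

section \<open>Accuracies, scores and Fisher information\<close>

text \<open>The variance of sensor c is \<open>(\<sigma> c)\<^sup>2\<close> and that of the noise is \<open>\<sigma>N\<^sup>2\<close>.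
  \<open>opinion_coeff t a\<close> and \<open>noise_coeff t a\<close> are the coefficients of the score of \<open>M\<^sub>a(t)\<close>,
  normalised so that ALG's opinion of a is \<open>\<tau>\<close> plus the score divided by the accuracy.\<close>

locale gossip =
  fixes P :: "nat \<Rightarrow> 's::finite \<Rightarrow> 's option" and \<sigma> :: "'s \<Rightarrow> real" and \<sigma>N :: real
  assumes \<sigma>_pos: "\<And>c. \<sigma> c > 0" and \<sigma>N_pos: "\<sigma>N > 0"
    and independent: "independent_pattern P"
begin

primrec accuracy :: "nat \<Rightarrow> 's \<Rightarrow> real" where
  "accuracy 0 = (\<lambda>a. 1 / (\<sigma> a)\<^sup>2)"
| "accuracy (Suc t) = (\<lambda>a. case P t a of None \<Rightarrow> accuracy t a
      | Some b \<Rightarrow> accuracy t a + accuracy t b / (1 + accuracy t b * \<sigma>N\<^sup>2))"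

definition discount :: "nat \<Rightarrow> 's \<Rightarrow> real" where
  "discount t b = 1 / (1 + accuracy t b * \<sigma>N\<^sup>2)"

primrec opinion_coeff :: "nat \<Rightarrow> 's \<Rightarrow> 's \<Rightarrow> real" where
  "opinion_coeff 0 = (\<lambda>a c. if c = a then 1 else 0)"
| "opinion_coeff (Suc t) = (\<lambda>a. case P t a of None \<Rightarrow> opinion_coeff t a
      | Some b \<Rightarrow> (\<lambda>c. opinion_coeff t a c + discount t b * opinion_coeff t b c))"

primrec noise_coeff :: "nat \<Rightarrow> 's \<Rightarrow> 's \<times> nat \<Rightarrow> real" where
  "noise_coeff 0 = (\<lambda>a e. 0)"
| "noise_coeff (Suc t) = (\<lambda>a. case P t a of None \<Rightarrow> noise_coeff t a
      | Some b \<Rightarrow> (\<lambda>e. noise_coeff t a e + discount t b * noise_coeff t b e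
                      + (if e = (a, t) then 1 - discount t b else 0)))"

lemma accuracy_pos: "accuracy t a > 0"
proof (induction t arbitrary: a)
  case 0
  show ?case using \<sigma>_pos[of a] by simp
next
  case (Suc t)
  have "accuracy t b / (1 + accuracy t b * \<sigma>N\<^sup>2) > 0" for b
    using Suc[of b] \<sigma>N_pos by (simp add: add_pos_nonneg)
  then show ?case using Suc[of a] by (simp split: option.split add: add_pos_pos)
qed

lemma disjoint_relevant: "P t a = Some b \<Longrightarrow> relevant P t a \<inter> relevant P t b = {}"
  using independent unfolding independent_pattern_def by blast

lemma opinion_coeff_nonzero_imp_relevant: "opinion_coeff t a c \<noteq> 0 \<Longrightarrow> c \<in> relevant P t a"
proof (induction t arbitrary: a)
  case (Suc t)
  show ?case
  proof (cases "P t a")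
    case (Some b)
    then have "opinion_coeff t a c \<noteq> 0 \<or> opinion_coeff t b c \<noteq> 0" using Suc.prems by auto
    then show ?thesis using Some Suc.IH[of a] Suc.IH[of b] by auto
  qed (use Suc.prems Suc.IH[of a] in auto)
qed (simp split: if_splits)

lemma noise_coeff_nonzero_imp_relevant:
  "noise_coeff t a (c, r) \<noteq> 0 \<Longrightarrow> c \<in> relevant P t a \<and> r < t"
proof (induction t arbitrary: a)
  case (Suc t)
  show ?case
  proof (cases "P t a")
    case (Some b)
    then have "noise_coeff t a (c, r) \<noteq> 0 \<or> noise_coeff t b (c, r) \<noteq> 0 \<or> (c, r) = (a, t)"
      using Suc.prems by (auto split: if_splits)
    then show ?thesis using Some Suc.IH[of a] Suc.IH[of b] self_in_relevant[of a P t] by auto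
  qed (use Suc.prems Suc.IH[of a] in auto)
qed simp

lemma noise_coeff_future: "t \<le> r \<Longrightarrow> noise_coeff t a (c, r) = 0"
  using noise_coeff_nonzero_imp_relevant by force

lemma opinion_coeff_self: "opinion_coeff t a a = 1"
proof (induction t arbitrary: a)
  case (Suc t)
  show ?case
  proof (cases "P t a")
    case (Some b)
    then have "opinion_coeff t b a = 0"
      using opinion_coeff_nonzero_imp_relevant[of t b a] disjoint_relevant[OF Some]
        self_in_relevant[of a P t] by auto
    then show ?thesis using Some Suc by simp
  qed (use Suc in simp)
qed simp

text \<open>Shifting every initial opinion \<open>X\<^sub>c(0)\<close> by \<open>s * opinion_coeff t a c\<close> and every noise
  \<open>\<eta>\<^sub>e\<close> by \<open>s * noise_coeff t a e\<close> leaves all observations in the history of a unchanged.\<close>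

lemma history_coeff_balance:
  "(c, d, r) \<in> history P t a \<Longrightarrow> opinion_coeff t a d - opinion_coeff t a c + noise_coeff t a (c, r) = 0"
proof (induction t arbitrary: a)
  case (Suc t)
  show ?case
  proof (cases "P t a")
    case None
    then show ?thesis using Suc by simp
  next
    case (Some b)
    have disj: "relevant P t a \<inter> relevant P t b = {}" "relevant P t b \<inter> relevant P t a = {}"
      using disjoint_relevant[OF Some] by auto
    have vanish: "opinion_coeff t x c = 0" "opinion_coeff t x d = 0" "noise_coeff t x (c, r) = 0"
      if "(c, d, r) \<in> history P t y" "relevant P t y \<inter> relevant P t x = {}" for x y
      using that history_subset_relevant[OF that(1)] opinion_coeff_nonzero_imp_relevant[of t x]
        noise_coeff_nonzero_imp_relevant[of t x c r] by auto
    consider "(c, d, r) \<in> history P t a" | "(c, d, r) \<in> history P t b" | "(c, d, r) = (a, b, t)"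
      using Suc.prems Some by auto
    then show ?thesis
    proof cases
      case 1
      then show ?thesis
        using Some Suc.IH[OF 1] vanish[OF 1 disj(1)] history_subset_relevant[OF 1] by simp
    next
      case 2
      have "opinion_coeff (Suc t) a d - opinion_coeff (Suc t) a c + noise_coeff (Suc t) a (c, r)
          = discount t b * (opinion_coeff t b d - opinion_coeff t b c + noise_coeff t b (c, r))"
        using Some vanish[OF 2 disj(2)] history_subset_relevant[OF 2]
        by (simp add: algebra_simps)
      then show ?thesis using Suc.IH[OF 2] by simp
    next
      case 3
      have "opinion_coeff t a b = 0" "opinion_coeff t b a = 0"
        using opinion_coeff_nonzero_imp_relevant[of t a b] opinion_coeff_nonzero_imp_relevant[of t b a]
          disj self_in_relevant[of a P t] self_in_relevant[of b P t] by auto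
      then show ?thesis
        using Some 3 opinion_coeff_self[of t a] opinion_coeff_self[of t b] noise_coeff_future
        by simp
    qed
  qed
qed simp

definition fisher_info :: "nat \<Rightarrow> 's \<Rightarrow> real" where
  "fisher_info t a = (\<Sum>c\<in>UNIV. (opinion_coeff t a c)\<^sup>2 / (\<sigma> c)\<^sup>2)
     + (\<Sum>e\<in>UNIV \<times> {..<t}. (noise_coeff t a e)\<^sup>2 / \<sigma>N\<^sup>2)"

lemma fisher_info_Suc:
  assumes "P t a = Some b"
  shows "fisher_info (Suc t) a
    = fisher_info t a + (discount t b)\<^sup>2 * fisher_info t b + (1 - discount t b)\<^sup>2 / \<sigma>N\<^sup>2"
proof -
  let ?k = "discount t b" and ?T = "UNIV \<times> {..<t}" and ?T' = "UNIV \<times> {..<Suc t}"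
  define \<delta> :: "'s \<times> nat \<Rightarrow> real" where "\<delta> e = (if e = (a, t) then 1 else 0)" for e
  have disj: "relevant P t a \<inter> relevant P t b = {}" by (rule disjoint_relevant[OF assms])
  have "opinion_coeff t a c * opinion_coeff t b c = 0" for c
    using opinion_coeff_nonzero_imp_relevant[of t a c] opinion_coeff_nonzero_imp_relevant[of t b c]
      disj by auto
  then have opinions: "(\<Sum>c\<in>UNIV. (opinion_coeff (Suc t) a c)\<^sup>2 / (\<sigma> c)\<^sup>2)
      = (\<Sum>c\<in>UNIV. (opinion_coeff t a c)\<^sup>2 / (\<sigma> c)\<^sup>2)
        + ?k\<^sup>2 * (\<Sum>c\<in>UNIV. (opinion_coeff t b c)\<^sup>2 / (\<sigma> c)\<^sup>2)"
    using assms by (simp add: sum_square_add_orthogonal)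
  have "noise_coeff t a e * noise_coeff t b e = 0" for e
    using noise_coeff_nonzero_imp_relevant[of t a "fst e" "snd e"]
      noise_coeff_nonzero_imp_relevant[of t b "fst e" "snd e"] disj by auto
  then have old_noises: "(\<Sum>e\<in>?T. (noise_coeff t a e + ?k * noise_coeff t b e)\<^sup>2 / \<sigma>N\<^sup>2)
      = (\<Sum>e\<in>?T. (noise_coeff t a e)\<^sup>2 / \<sigma>N\<^sup>2) + ?k\<^sup>2 * (\<Sum>e\<in>?T. (noise_coeff t b e)\<^sup>2 / \<sigma>N\<^sup>2)"
    by (rule sum_square_add_orthogonal)
  have "(noise_coeff t a e + ?k * noise_coeff t b e) * \<delta> e = 0" for e
    by (simp add: \<delta>_def noise_coeff_future)
  then have "(\<Sum>e\<in>?T'. (noise_coeff t a e + ?k * noise_coeff t b e + (1 - ?k) * \<delta> e)\<^sup>2 / \<sigma>N\<^sup>2)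
      = (\<Sum>e\<in>?T'. (noise_coeff t a e + ?k * noise_coeff t b e)\<^sup>2 / \<sigma>N\<^sup>2)
        + (1 - ?k)\<^sup>2 * (\<Sum>e\<in>?T'. (\<delta> e)\<^sup>2 / \<sigma>N\<^sup>2)"
    by (rule sum_square_add_orthogonal)
  moreover have "noise_coeff (Suc t) a e = noise_coeff t a e + ?k * noise_coeff t b e + (1 - ?k) * \<delta> e" for e
    using assms by (simp add: \<delta>_def)
  ultimately have "(\<Sum>e\<in>?T'. (noise_coeff (Suc t) a e)\<^sup>2 / \<sigma>N\<^sup>2)
      = (\<Sum>e\<in>?T'. (noise_coeff t a e + ?k * noise_coeff t b e)\<^sup>2 / \<sigma>N\<^sup>2)
        + (1 - ?k)\<^sup>2 * (\<Sum>e\<in>?T'. (\<delta> e)\<^sup>2 / \<sigma>N\<^sup>2)"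
    by simp
  also have "(\<Sum>e\<in>?T'. (\<delta> e)\<^sup>2 / \<sigma>N\<^sup>2) = 1 / \<sigma>N\<^sup>2"
    by (simp add: \<delta>_def if_distrib[of "\<lambda>x. x\<^sup>2 / _"] sum.If_cases)
  also have "(\<Sum>e\<in>?T'. (noise_coeff t a e + ?k * noise_coeff t b e)\<^sup>2 / \<sigma>N\<^sup>2)
      = (\<Sum>e\<in>?T. (noise_coeff t a e + ?k * noise_coeff t b e)\<^sup>2 / \<sigma>N\<^sup>2)"
    by (rule sum_UNIV_times_lessThan_Suc) (simp add: noise_coeff_future)
  finally show ?thesis
    unfolding fisher_info_def opinions old_noises by (simp add: algebra_simps)
qed

lemma fisher_info_eq_accuracy: "fisher_info t a = accuracy t a"
proof (induction t arbitrary: a)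
  case 0
  have "(\<Sum>c\<in>UNIV. (opinion_coeff 0 a c)\<^sup>2 / (\<sigma> c)\<^sup>2) = 1 / (\<sigma> a)\<^sup>2"
    by (simp add: if_distrib[of "\<lambda>x. x\<^sup>2 / _"] sum.If_cases)
  then show ?case by (simp add: fisher_info_def)
next
  case (Suc t)
  show ?case
  proof (cases "P t a")
    case None
    have "(\<Sum>e\<in>UNIV \<times> {..<Suc t}. (noise_coeff t a e)\<^sup>2 / \<sigma>N\<^sup>2)
        = (\<Sum>e\<in>UNIV \<times> {..<t}. (noise_coeff t a e)\<^sup>2 / \<sigma>N\<^sup>2)"
      by (rule sum_UNIV_times_lessThan_Suc) (simp add: noise_coeff_future)
    then show ?thesis using None Suc[of a] by (simp add: fisher_info_def)
  next
    case (Some b)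
    then show ?thesis
      using Suc[of a] Suc[of b] accuracy_pos[of t b] \<sigma>N_pos
      by (simp add: fisher_info_Suc discount_def discounted_precision_eq)
  qed
qed

definition score :: "real \<Rightarrow> nat \<Rightarrow> 's \<Rightarrow> 's omega \<Rightarrow> real" where
  "score \<tau> t a \<omega> = (\<Sum>c\<in>UNIV. opinion_coeff t a c * (fst \<omega> c - \<tau>) / (\<sigma> c)\<^sup>2)
     + (\<Sum>e\<in>UNIV \<times> {..<t}. noise_coeff t a e * snd \<omega> e / \<sigma>N\<^sup>2)"

lemma score_Suc:
  assumes "P t a = Some b"
  shows "score \<tau> (Suc t) a \<omega>
    = score \<tau> t a \<omega> + discount t b * score \<tau> t b \<omega> + (1 - discount t b) * snd \<omega> (a, t) / \<sigma>N\<^sup>2"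
proof -
  let ?k = "discount t b" and ?T = "UNIV \<times> {..<t}" and ?T' = "UNIV \<times> {..<Suc t}"
  define \<delta> :: "'s \<times> nat \<Rightarrow> real" where "\<delta> e = (if e = (a, t) then 1 - ?k else 0)" for e
  have "opinion_coeff (Suc t) a c * (fst \<omega> c - \<tau>) / (\<sigma> c)\<^sup>2
      = opinion_coeff t a c * (fst \<omega> c - \<tau>) / (\<sigma> c)\<^sup>2 + ?k * (opinion_coeff t b c * (fst \<omega> c - \<tau>) / (\<sigma> c)\<^sup>2)"
    for c using assms \<sigma>_pos[of c] by (simp add: field_simps)
  then have "(\<Sum>c\<in>UNIV. opinion_coeff (Suc t) a c * (fst \<omega> c - \<tau>) / (\<sigma> c)\<^sup>2)
      = (\<Sum>c\<in>UNIV. opinion_coeff t a c * (fst \<omega> c - \<tau>) / (\<sigma> c)\<^sup>2)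
        + ?k * (\<Sum>c\<in>UNIV. opinion_coeff t b c * (fst \<omega> c - \<tau>) / (\<sigma> c)\<^sup>2)"
    by (simp add: sum.distrib sum_distrib_left)
  moreover have "noise_coeff (Suc t) a e * snd \<omega> e / \<sigma>N\<^sup>2 = noise_coeff t a e * snd \<omega> e / \<sigma>N\<^sup>2
      + ?k * (noise_coeff t b e * snd \<omega> e / \<sigma>N\<^sup>2) + \<delta> e * snd \<omega> e / \<sigma>N\<^sup>2" for e
    using assms by (simp add: \<delta>_def add_divide_distrib algebra_simps)
  then have "(\<Sum>e\<in>?T'. noise_coeff (Suc t) a e * snd \<omega> e / \<sigma>N\<^sup>2)
      = (\<Sum>e\<in>?T'. noise_coeff t a e * snd \<omega> e / \<sigma>N\<^sup>2)
        + ?k * (\<Sum>e\<in>?T'. noise_coeff t b e * snd \<omega> e / \<sigma>N\<^sup>2)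
        + (\<Sum>e\<in>?T'. \<delta> e * snd \<omega> e / \<sigma>N\<^sup>2)"
    by (simp add: sum.distrib sum_distrib_left)
  moreover have "(\<Sum>e\<in>?T'. noise_coeff t x e * snd \<omega> e / \<sigma>N\<^sup>2)
      = (\<Sum>e\<in>?T. noise_coeff t x e * snd \<omega> e / \<sigma>N\<^sup>2)" for x
    by (rule sum_UNIV_times_lessThan_Suc) (simp add: noise_coeff_future)
  moreover have "(\<Sum>e\<in>?T'. \<delta> e * snd \<omega> e / \<sigma>N\<^sup>2) = (1 - ?k) * snd \<omega> (a, t) / \<sigma>N\<^sup>2"
    by (simp add: \<delta>_def if_distrib[of "\<lambda>x. x * _ / _"] sum.If_cases)
  ultimately show ?thesis by (simp add: score_def algebra_simps)
qed

lemma accuracy_Suc_Some: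
  "P t a = Some b \<Longrightarrow> accuracy (Suc t) a = accuracy t a + accuracy t b * discount t b"
  by (simp add: discount_def)

definition gain :: "nat \<Rightarrow> 's \<Rightarrow> 's \<Rightarrow> real" where
  "gain t a b = accuracy t b * discount t b / (accuracy t a + accuracy t b * discount t b)"

primrec alg_coeff :: "nat \<Rightarrow> 's \<Rightarrow> 's \<times> 's \<times> nat \<Rightarrow> real" where
  "alg_coeff 0 = (\<lambda>a e. 0)"
| "alg_coeff (Suc t) = (\<lambda>a. case P t a of None \<Rightarrow> alg_coeff t a
      | Some b \<Rightarrow> (\<lambda>e. (1 - gain t a b) * alg_coeff t a e + gain t a b * alg_coeff t b e
                      + (if e = (a, b, t) then gain t a b else 0)))"

lemma alg_coeff_nonzero_imp_history: "alg_coeff t a e \<noteq> 0 \<Longrightarrow> e \<in> history P t a"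
proof (induction t arbitrary: a)
  case (Suc t)
  show ?case
  proof (cases "P t a")
    case (Some b)
    then have "alg_coeff t a e \<noteq> 0 \<or> alg_coeff t b e \<noteq> 0 \<or> e = (a, b, t)"
      using Suc.prems by (auto split: if_splits)
    then show ?thesis using Some Suc.IH[of a] Suc.IH[of b] by auto
  qed (use Suc.prems Suc.IH[of a] in auto)
qed simp

end

locale gossip_alg = gossip P \<sigma> \<sigma>N for P :: "nat \<Rightarrow> 's::finite \<Rightarrow> 's option" and \<sigma> \<sigma>N +
  fixes \<Phi> :: "'s \<Rightarrow> real \<Rightarrow> real" and N :: "real \<Rightarrow> real"
  assumes dvar_\<Phi>: "\<And>c. dvar (\<Phi> c) = (\<sigma> c)\<^sup>2" and dvar_N: "dvar N = \<sigma>N\<^sup>2"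
begin

lemma alg_accuracy: "snd (alg P \<Phi> N \<omega> t) = accuracy t"
  by (induction t) (auto simp: Let_def dvar_\<Phi> dvar_N fun_eq_iff split: option.split)

lemma alg_opinion_step:
  assumes "P t a = Some b"
  shows "fst (alg P \<Phi> N \<omega> (Suc t)) a = fst (alg P \<Phi> N \<omega> t) a
    + (fst (alg P \<Phi> N \<omega> t) b - fst (alg P \<Phi> N \<omega> t) a + snd \<omega> (a, t)) * gain t a b"
  using assms by (simp add: Let_def alg_accuracy dvar_N gain_def discount_def)

lemma alg_opinion_eq_history_sum:
  "fst (alg P \<Phi> N \<omega> t) a = fst \<omega> a + (\<Sum>e\<in>history P t a. alg_coeff t a e * Dobs \<omega> e)"
proof (induction t arbitrary: a)
  case (Suc t)
  show ?case
  proof (cases "P t a")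
    case None
    then show ?thesis using Suc[of a] by (simp add: Let_def)
  next
    case (Some b)
    let ?q = "gain t a b" and ?H = "history P (Suc t) a"
    have H: "?H = history P t a \<union> history P t b \<union> {(a, b, t)}" using Some by simp
    have "finite ?H" by (rule finite_history)
    have restrict_a: "(\<Sum>e\<in>?H. alg_coeff t a e * Dobs \<omega> e) = (\<Sum>e\<in>history P t a. alg_coeff t a e * Dobs \<omega> e)"
      by (rule sum.mono_neutral_right[OF \<open>finite ?H\<close>]) (use H in \<open>auto dest: alg_coeff_nonzero_imp_history\<close>)
    have restrict_b: "(\<Sum>e\<in>?H. alg_coeff t b e * Dobs \<omega> e) = (\<Sum>e\<in>history P t b. alg_coeff t b e * Dobs \<omega> e)"
      by (rule sum.mono_neutral_right[OF \<open>finite ?H\<close>]) (use H in \<open>auto dest: alg_coeff_nonzero_imp_history\<close>)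
    have new: "(\<Sum>e\<in>?H. (if e = (a, b, t) then ?q else 0) * Dobs \<omega> e) = ?q * Dobs \<omega> (a, b, t)"
      using \<open>finite ?H\<close> H by (simp add: if_distrib[of "\<lambda>x. x * _"] sum.If_cases Int_absorb2)
    have "(\<Sum>e\<in>?H. alg_coeff (Suc t) a e * Dobs \<omega> e)
        = (1 - ?q) * (\<Sum>e\<in>?H. alg_coeff t a e * Dobs \<omega> e) + ?q * (\<Sum>e\<in>?H. alg_coeff t b e * Dobs \<omega> e)
          + (\<Sum>e\<in>?H. (if e = (a, b, t) then ?q else 0) * Dobs \<omega> e)"
    proof -
      have "alg_coeff (Suc t) a e * Dobs \<omega> e = (1 - ?q) * (alg_coeff t a e * Dobs \<omega> e)
          + ?q * (alg_coeff t b e * Dobs \<omega> e) + (if e = (a, b, t) then ?q else 0) * Dobs \<omega> e" for e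
        using Some by (simp add: algebra_simps)
      then show ?thesis by (simp only: sum.distrib sum_distrib_left)
    qed
    then have "(\<Sum>e\<in>?H. alg_coeff (Suc t) a e * Dobs \<omega> e)
        = (1 - ?q) * (\<Sum>e\<in>history P t a. alg_coeff t a e * Dobs \<omega> e)
          + ?q * (\<Sum>e\<in>history P t b. alg_coeff t b e * Dobs \<omega> e) + ?q * Dobs \<omega> (a, b, t)"
      by (simp only: restrict_a restrict_b new)
    then show ?thesis
      unfolding alg_opinion_step[OF Some] Suc[of a] Suc[of b] by (simp add: Dobs_def algebra_simps)
  qed
qed simp

lemma alg_opinion_eq_score: "fst (alg P \<Phi> N \<omega> t) a = \<tau> + score \<tau> t a \<omega> / accuracy t a"
proof (induction t arbitrary: a)
  case 0
  have "score \<tau> 0 a \<omega> = (fst \<omega> a - \<tau>) / (\<sigma> a)\<^sup>2"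
    by (simp add: score_def if_distrib[of "\<lambda>x. x * _ / _"] sum.If_cases)
  then show ?case using \<sigma>_pos[of a] by simp
next
  case (Suc t)
  show ?case
  proof (cases "P t a")
    case None
    have "score \<tau> (Suc t) a \<omega> = score \<tau> t a \<omega>"
      unfolding score_def using None
      by (simp add: sum_UNIV_times_lessThan_Suc noise_coeff_future)
    then show ?thesis using None Suc[of a] by (simp add: Let_def)
  next
    case (Some b)
    show ?thesis
      unfolding alg_opinion_step[OF Some] Suc[of a] Suc[of b] score_Suc[OF Some] gain_def
        accuracy_Suc_Some[OF Some]
      by (rule weighted_update_eq) (use accuracy_pos \<sigma>N_pos in \<open>auto simp: discount_def\<close>)
  qed
qed

end

section \<open>Product measures\<close>

lemma distr_pair_snd:
  assumes "prob_space M1" "sigma_finite_measure M2"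
  shows "distr (M1 \<Otimes>\<^sub>M M2) M2 snd = M2"
proof (intro measure_eqI)
  interpret P1: prob_space M1 by fact
  interpret S2: sigma_finite_measure M2 by fact
  fix A assume A: "A \<in> sets (distr (M1 \<Otimes>\<^sub>M M2) M2 snd)"
  from A have "emeasure (distr (M1 \<Otimes>\<^sub>M M2) M2 snd) A = emeasure (M1 \<Otimes>\<^sub>M M2) (space M1 \<times> A)"
    by (auto simp add: emeasure_distr space_pair_measure dest: sets.sets_into_space
        intro!: arg_cong2[where f=emeasure])
  with A show "emeasure (distr (M1 \<Otimes>\<^sub>M M2) M2 snd) A = emeasure M2 A"
    by (simp add: S2.emeasure_pair_measure_Times P1.emeasure_space_1)
qed simp

lemma integral_pair_measure_fst:
  fixes f :: "'a \<Rightarrow> real"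
  assumes "prob_space M2" and f: "integrable M1 f"
  shows "integrable (M1 \<Otimes>\<^sub>M M2) (\<lambda>\<omega>. f (fst \<omega>))"
    and "integral\<^sup>L (M1 \<Otimes>\<^sub>M M2) (\<lambda>\<omega>. f (fst \<omega>)) = integral\<^sup>L M1 f"
proof -
  have [measurable]: "f \<in> borel_measurable M1" using f by auto
  have "distr (M1 \<Otimes>\<^sub>M M2) M1 fst = M1" by (rule prob_space.distr_pair_fst[OF assms(1)])
  then show "integrable (M1 \<Otimes>\<^sub>M M2) (\<lambda>\<omega>. f (fst \<omega>))"
    and "integral\<^sup>L (M1 \<Otimes>\<^sub>M M2) (\<lambda>\<omega>. f (fst \<omega>)) = integral\<^sup>L M1 f"
    using f integrable_distr_eq[of fst "M1 \<Otimes>\<^sub>M M2" M1 f] integral_distr[of fst "M1 \<Otimes>\<^sub>M M2" M1 f]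
    by simp_all
qed

lemma integral_pair_measure_snd:
  fixes g :: "'b \<Rightarrow> real"
  assumes "prob_space M1" "sigma_finite_measure M2" and g: "integrable M2 g"
  shows "integrable (M1 \<Otimes>\<^sub>M M2) (\<lambda>\<omega>. g (snd \<omega>))"
    and "integral\<^sup>L (M1 \<Otimes>\<^sub>M M2) (\<lambda>\<omega>. g (snd \<omega>)) = integral\<^sup>L M2 g"
proof -
  have [measurable]: "g \<in> borel_measurable M2" using g by auto
  have "distr (M1 \<Otimes>\<^sub>M M2) M2 snd = M2" by (rule distr_pair_snd[OF assms(1,2)])
  then show "integrable (M1 \<Otimes>\<^sub>M M2) (\<lambda>\<omega>. g (snd \<omega>))"
    and "integral\<^sup>L (M1 \<Otimes>\<^sub>M M2) (\<lambda>\<omega>. g (snd \<omega>)) = integral\<^sup>L M2 g"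
    using g integrable_distr_eq[of snd "M1 \<Otimes>\<^sub>M M2" M2 g] integral_distr[of snd "M1 \<Otimes>\<^sub>M M2" M2 g]
    by simp_all
qed

lemma pair_sum_moments:
  fixes F :: "'a \<Rightarrow> real" and G :: "'b \<Rightarrow> real"
  assumes P1: "prob_space M1" and P2: "prob_space M2"
    and F: "integrable M1 F" "integrable M1 (\<lambda>x. (F x)\<^sup>2)" "integral\<^sup>L M1 F = 0"
    and G: "integrable M2 G" "integrable M2 (\<lambda>x. (G x)\<^sup>2)" "integral\<^sup>L M2 G = 0"
  shows "integrable (M1 \<Otimes>\<^sub>M M2) (\<lambda>\<omega>. F (fst \<omega>) + G (snd \<omega>))"
    and "integral\<^sup>L (M1 \<Otimes>\<^sub>M M2) (\<lambda>\<omega>. F (fst \<omega>) + G (snd \<omega>)) = 0"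
    and "integrable (M1 \<Otimes>\<^sub>M M2) (\<lambda>\<omega>. (F (fst \<omega>) + G (snd \<omega>))\<^sup>2)"
    and "integral\<^sup>L (M1 \<Otimes>\<^sub>M M2) (\<lambda>\<omega>. (F (fst \<omega>) + G (snd \<omega>))\<^sup>2)
      = integral\<^sup>L M1 (\<lambda>x. (F x)\<^sup>2) + integral\<^sup>L M2 (\<lambda>x. (G x)\<^sup>2)"
proof -
  interpret P1: prob_space M1 by fact
  interpret P2: prob_space M2 by fact
  interpret PP: pair_sigma_finite M1 M2 ..
  have [measurable]: "F \<in> borel_measurable M1" "G \<in> borel_measurable M2" using F G by auto
  note lift1 = integral_pair_measure_fst[OF P2]
    and lift2 = integral_pair_measure_snd[OF P1 P2.sigma_finite_measure_axioms]
  note a1 = lift1[OF F(1)] and a2 = lift1[OF F(2)] and b1 = lift2[OF G(1)] and b2 = lift2[OF G(2)]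
  show "integrable (M1 \<Otimes>\<^sub>M M2) (\<lambda>\<omega>. F (fst \<omega>) + G (snd \<omega>))" using a1 b1 by auto
  show "integral\<^sup>L (M1 \<Otimes>\<^sub>M M2) (\<lambda>\<omega>. F (fst \<omega>) + G (snd \<omega>)) = 0"
    using a1 b1 F(3) G(3) by simp
  have cr: "integrable (M1 \<Otimes>\<^sub>M M2) (\<lambda>\<omega>. F (fst \<omega>) * G (snd \<omega>))"
  proof (rule Bochner_Integration.integrable_bound)
    show "integrable (M1 \<Otimes>\<^sub>M M2) (\<lambda>\<omega>. (F (fst \<omega>))\<^sup>2 + (G (snd \<omega>))\<^sup>2)" using a2 b2 by auto
    show "(\<lambda>\<omega>. F (fst \<omega>) * G (snd \<omega>)) \<in> borel_measurable (M1 \<Otimes>\<^sub>M M2)" by measurable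
    show "AE \<omega> in M1 \<Otimes>\<^sub>M M2. norm (F (fst \<omega>) * G (snd \<omega>)) \<le> norm ((F (fst \<omega>))\<^sup>2 + (G (snd \<omega>))\<^sup>2)"
    proof (rule AE_I2)
      fix \<omega>
      have "\<bar>F (fst \<omega>) * G (snd \<omega>)\<bar> \<le> (F (fst \<omega>))\<^sup>2 + (G (snd \<omega>))\<^sup>2"
        using sum_squares_bound[of "\<bar>F (fst \<omega>)\<bar>" "\<bar>G (snd \<omega>)\<bar>"]
          mult_nonneg_nonneg[OF abs_ge_zero[of "F (fst \<omega>)"] abs_ge_zero[of "G (snd \<omega>)"]]
        unfolding abs_mult mult.assoc power2_abs by linarith
      then show "norm (F (fst \<omega>) * G (snd \<omega>)) \<le> norm ((F (fst \<omega>))\<^sup>2 + (G (snd \<omega>))\<^sup>2)" by simp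
    qed
  qed
  have cr0: "integral\<^sup>L (M1 \<Otimes>\<^sub>M M2) (\<lambda>\<omega>. F (fst \<omega>) * G (snd \<omega>)) = 0"
  proof -
    have ci: "integrable (M1 \<Otimes>\<^sub>M M2) (case_prod (\<lambda>x y. F x * G y))" using cr by (simp add: case_prod_unfold)
    have "integral\<^sup>L (M1 \<Otimes>\<^sub>M M2) (case_prod (\<lambda>x y. F x * G y)) = (\<integral>x. (\<integral>y. F x * G y \<partial>M2) \<partial>M1)"
      using PP.integral_fst[OF ci] by simp
    also have "\<dots> = 0" using G(3) by simp
    finally show ?thesis by (simp add: case_prod_unfold)
  qed
  have sq: "(F (fst \<omega>) + G (snd \<omega>))\<^sup>2 = (F (fst \<omega>))\<^sup>2 + (G (snd \<omega>))\<^sup>2 + 2 * (F (fst \<omega>) * G (snd \<omega>))" for \<omega>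
    by (simp add: power2_eq_square algebra_simps)
  show "integrable (M1 \<Otimes>\<^sub>M M2) (\<lambda>\<omega>. (F (fst \<omega>) + G (snd \<omega>))\<^sup>2)"
    unfolding sq using a2 b2 cr by auto
  show "integral\<^sup>L (M1 \<Otimes>\<^sub>M M2) (\<lambda>\<omega>. (F (fst \<omega>) + G (snd \<omega>))\<^sup>2)
      = integral\<^sup>L M1 (\<lambda>x. (F x)\<^sup>2) + integral\<^sup>L M2 (\<lambda>x. (G x)\<^sup>2)"
    unfolding sq using a2 b2 cr cr0 by simp
qed

section \<open>Gaussian measures\<close>

abbreviation gauss :: "real \<Rightarrow> real \<Rightarrow> real measure" where
  "gauss \<mu> \<sigma> \<equiv> dens_measure (normal_density \<mu> \<sigma>)"

lemma sets_gauss[simp, measurable_cong]: "sets (gauss \<mu> \<sigma>) = sets borel"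
  by (simp add: dens_measure_def)

lemma space_gauss[simp]: "space (gauss \<mu> \<sigma>) = UNIV"
  by (simp add: dens_measure_def)

lemma prob_space_gauss: "\<sigma> > 0 \<Longrightarrow> prob_space (gauss \<mu> \<sigma>)"
  unfolding dens_measure_def by (rule prob_space_normal_density)

lemma distr_gauss_add:
  assumes "\<sigma> > 0"
  shows "distr (gauss \<mu> \<sigma>) borel (\<lambda>x. x + c) = gauss (\<mu> + c) \<sigma>"
proof -
  have "gauss (\<mu> + c) \<sigma> = density (distr lborel borel ((+) c)) (\<lambda>x. ennreal (normal_density (\<mu> + c) \<sigma> x))"
    by (simp add: lborel_distr_plus dens_measure_def)
  also have "\<dots> = distr (density lborel (\<lambda>x. ennreal (normal_density (\<mu> + c) \<sigma> (c + x)))) borel ((+) c)"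
    by (rule density_distr) auto
  also have "\<dots> = distr (gauss \<mu> \<sigma>) borel (\<lambda>x. x + c)"
  proof -
    have "(\<lambda>x. ennreal (normal_density (\<mu> + c) \<sigma> (c + x))) = (\<lambda>x. ennreal (normal_density \<mu> \<sigma> x))"
      by (simp add: normal_density_def)
    moreover have "((+) c) = (\<lambda>x. x + c)" by auto
    ultimately show ?thesis by (simp only: dens_measure_def)
  qed
  finally show ?thesis ..
qed

lemma normal_density_add_mean:
  assumes "\<sigma> > 0"
  shows "normal_density (\<mu> + c) \<sigma> x = normal_density \<mu> \<sigma> x * exp (c * (x - \<mu>) / \<sigma>\<^sup>2 - c\<^sup>2 / (2 * \<sigma>\<^sup>2))"
proof -
  have e: "exp (-(x - (\<mu> + c))\<^sup>2 / (2 * \<sigma>\<^sup>2))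
      = exp (-(x - \<mu>)\<^sup>2 / (2 * \<sigma>\<^sup>2)) * exp (c * (x - \<mu>) / \<sigma>\<^sup>2 - c\<^sup>2 / (2 * \<sigma>\<^sup>2))"
    unfolding exp_add[symmetric]
    by (rule arg_cong[where f=exp]) (use assms in \<open>simp add: field_simps power2_eq_square\<close>)
  show ?thesis unfolding normal_density_def e by simp
qed

lemma gauss_add_mean_density:
  assumes "\<sigma> > 0"
  shows "gauss (\<mu> + c) \<sigma> = density (gauss \<mu> \<sigma>) (\<lambda>x. ennreal (exp (c * (x - \<mu>) / \<sigma>\<^sup>2 - c\<^sup>2 / (2 * \<sigma>\<^sup>2))))"
  unfolding dens_measure_def
  by (subst density_density_eq) (auto simp: normal_density_add_mean[OF assms] ennreal_mult normal_density_nonneg)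

abbreviation gauss_prod :: "'i set \<Rightarrow> ('i \<Rightarrow> real) \<Rightarrow> ('i \<Rightarrow> real) \<Rightarrow> ('i \<Rightarrow> real) measure" where
  "gauss_prod I \<mu> \<sigma> \<equiv> PiM I (\<lambda>i. gauss (\<mu> i) (\<sigma> i))"

lemma product_prob_space_gauss: "(\<And>i. \<sigma> i > 0) \<Longrightarrow> product_prob_space (\<lambda>i. gauss (\<mu> i) (\<sigma> i))"
  by (intro product_prob_spaceI prob_space_gauss)

lemma sets_gauss_prod: "sets (gauss_prod I \<mu> \<sigma>) = sets (gauss_prod I \<mu>' \<sigma>')"
  by (intro sets_PiM_cong) auto

lemma measurable_restrict_add[measurable]: "(\<lambda>x. \<lambda>i\<in>I. x i + c i) \<in> gauss_prod I \<mu> \<sigma> \<rightarrow>\<^sub>M gauss_prod I \<mu>' \<sigma>'"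
  by (rule measurable_restrict) (simp add: measurable_component_singleton)

lemma distr_gauss_prod_add:
  assumes I: "finite I" and sig: "\<And>i. \<sigma> i > 0"
  shows "distr (gauss_prod I \<mu> \<sigma>) (gauss_prod I \<mu> \<sigma>) (\<lambda>x. \<lambda>i\<in>I. x i + c i)
    = gauss_prod I (\<lambda>i. \<mu> i + c i) \<sigma>"
proof -
  interpret T: product_prob_space "\<lambda>i. gauss (\<mu> i + c i) (\<sigma> i)"
    by (rule product_prob_space_gauss) (rule sig)
  interpret S: product_prob_space "\<lambda>i. gauss (\<mu> i) (\<sigma> i)"
    by (rule product_prob_space_gauss) (rule sig)
  let ?M = "gauss_prod I \<mu> \<sigma>" and ?T = "\<lambda>x. \<lambda>i\<in>I. x i + c i"
  show ?thesis
  proof (rule T.PiM_eqI[OF I])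
    show "sets (distr ?M ?M ?T) = sets (gauss_prod I (\<lambda>i. \<mu> i + c i) \<sigma>)"
      by (simp add: sets_gauss_prod)
    fix A assume A: "\<And>i. i \<in> I \<Longrightarrow> A i \<in> sets (gauss (\<mu> i + c i) (\<sigma> i))"
    have shifted: "(\<lambda>x. x + c i) -` A i \<in> sets (gauss (\<mu> i) (\<sigma> i))" if "i \<in> I" for i
      using measurable_sets[of "\<lambda>x. x + c i" borel borel "A i"] A[OF that] by simp
    have "emeasure (distr ?M ?M ?T) (Pi\<^sub>E I A) = emeasure ?M (?T -` Pi\<^sub>E I A \<inter> space ?M)"
      by (rule emeasure_distr) (use A I in auto)
    also have "?T -` Pi\<^sub>E I A \<inter> space ?M = Pi\<^sub>E I (\<lambda>i. (\<lambda>x. x + c i) -` A i)"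
      by (auto simp: space_PiM PiE_def Pi_def extensional_def)
    also have "emeasure ?M (Pi\<^sub>E I (\<lambda>i. (\<lambda>x. x + c i) -` A i))
        = (\<Prod>i\<in>I. emeasure (gauss (\<mu> i) (\<sigma> i)) ((\<lambda>x. x + c i) -` A i))"
      by (rule S.emeasure_PiM[OF I shifted])
    also have "\<dots> = (\<Prod>i\<in>I. emeasure (distr (gauss (\<mu> i) (\<sigma> i)) borel (\<lambda>x. x + c i)) (A i))"
      using A by (intro prod.cong refl) (simp add: emeasure_distr)
    also have "\<dots> = (\<Prod>i\<in>I. emeasure (gauss (\<mu> i + c i) (\<sigma> i)) (A i))"
      by (simp add: distr_gauss_add sig)
    finally show "emeasure (distr ?M ?M ?T) (Pi\<^sub>E I A) = (\<Prod>i\<in>I. emeasure (gauss (\<mu> i + c i) (\<sigma> i)) (A i))" .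
  qed
qed

lemma indicator_PiE_eq_prod:
  assumes "finite I" "x \<in> extensional I"
  shows "(indicator (Pi\<^sub>E I A) x :: ennreal) = (\<Prod>i\<in>I. indicator (A i) (x i))"
proof (cases "x \<in> Pi\<^sub>E I A")
  case True
  then have "\<forall>i\<in>I. x i \<in> A i" by (auto simp: PiE_def)
  then show ?thesis using True by (simp add: indicator_def)
next
  case False
  then obtain i where "i \<in> I" "x i \<notin> A i" using assms by (auto simp: PiE_def Pi_def)
  then show ?thesis using False assms by (auto simp: indicator_def intro!: prod_zero[symmetric])
qed

lemma gauss_prod_add_mean_density:
  assumes I: "finite I" and sig: "\<And>i. \<sigma> i > 0"
  shows "gauss_prod I (\<lambda>i. \<mu> i + c i) \<sigma> = density (gauss_prod I \<mu> \<sigma>)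
     (\<lambda>x. ennreal (exp (\<Sum>i\<in>I. c i * (x i - \<mu> i) / (\<sigma> i)\<^sup>2 - (c i)\<^sup>2 / (2 * (\<sigma> i)\<^sup>2))))"
    (is "_ = density ?M ?f")
proof -
  interpret T: product_prob_space "\<lambda>i. gauss (\<mu> i + c i) (\<sigma> i)"
    by (rule product_prob_space_gauss) (rule sig)
  interpret S: product_prob_space "\<lambda>i. gauss (\<mu> i) (\<sigma> i)"
    by (rule product_prob_space_gauss) (rule sig)
  define w where "w i y = ennreal (exp (c i * (y - \<mu> i) / (\<sigma> i)\<^sup>2 - (c i)\<^sup>2 / (2 * (\<sigma> i)\<^sup>2)))" for i y
  have [measurable]: "w i \<in> borel_measurable borel" for i unfolding w_def by measurable
  have f: "?f = (\<lambda>x. \<Prod>i\<in>I. w i (x i))" by (simp add: w_def exp_sum[OF I] prod_ennreal)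
  have w: "emeasure (gauss (\<mu> i + c i) (\<sigma> i)) (A i) = (\<integral>\<^sup>+y. w i y * indicator (A i) y \<partial>gauss (\<mu> i) (\<sigma> i))"
    if "A i \<in> sets borel" for A i
    using that by (simp add: gauss_add_mean_density[OF sig] w_def[abs_def] emeasure_density)
  show ?thesis
  proof (rule T.PiM_eqI[OF I, symmetric])
    show "sets (density ?M ?f) = sets (gauss_prod I (\<lambda>i. \<mu> i + c i) \<sigma>)"
      by (simp add: sets_gauss_prod)
    fix A assume A: "\<And>i. i \<in> I \<Longrightarrow> A i \<in> sets (gauss (\<mu> i + c i) (\<sigma> i))"
    have "Pi\<^sub>E I A \<in> sets ?M" by (rule sets_PiM_I_finite[OF I]) (use A in auto)
    then have "emeasure (density ?M ?f) (Pi\<^sub>E I A) = (\<integral>\<^sup>+x. ?f x * indicator (Pi\<^sub>E I A) x \<partial>?M)"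
      by (rule emeasure_density[rotated]) (simp add: f)
    also have "\<dots> = (\<integral>\<^sup>+x. (\<Prod>i\<in>I. w i (x i) * indicator (A i) (x i)) \<partial>?M)"
    proof (intro nn_integral_cong)
      fix x assume "x \<in> space ?M"
      then have "indicator (Pi\<^sub>E I A) x = (\<Prod>i\<in>I. indicator (A i) (x i) :: ennreal)"
        by (intro indicator_PiE_eq_prod[OF I]) (simp add: space_PiM PiE_def)
      then show "?f x * indicator (Pi\<^sub>E I A) x = (\<Prod>i\<in>I. w i (x i) * indicator (A i) (x i))"
        by (simp add: prod.distrib fun_cong[OF f])
    qed
    also have "\<dots> = (\<Prod>i\<in>I. (\<integral>\<^sup>+y. w i y * indicator (A i) y \<partial>gauss (\<mu> i) (\<sigma> i)))"
      by (rule S.product_nn_integral_prod[OF I]) (use A in auto)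
    finally show "emeasure (density ?M ?f) (Pi\<^sub>E I A) = (\<Prod>i\<in>I. emeasure (gauss (\<mu> i + c i) (\<sigma> i)) (A i))"
      using A by (simp add: w)
  qed
qed

lemma gauss_moments:
  assumes "\<sigma> > 0"
  shows "integrable (gauss \<mu> \<sigma>) (\<lambda>y. y - \<mu>)" "integral\<^sup>L (gauss \<mu> \<sigma>) (\<lambda>y. y - \<mu>) = 0"
    "integrable (gauss \<mu> \<sigma>) (\<lambda>y. (y - \<mu>)\<^sup>2)" "integral\<^sup>L (gauss \<mu> \<sigma>) (\<lambda>y. (y - \<mu>)\<^sup>2) = \<sigma>\<^sup>2"
    "integrable (gauss \<mu> \<sigma>) (\<lambda>y. y)" "integral\<^sup>L (gauss \<mu> \<sigma>) (\<lambda>y. y) = \<mu>"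
proof -
  have nn: "AE x in lborel. 0 \<le> normal_density \<mu> \<sigma> x" by simp
  have i1: "integrable lborel (\<lambda>x. normal_density \<mu> \<sigma> x * (x - \<mu>) ^ 1)"
    using integrable_normal_moment[OF assms, of \<mu> 1] .
  have i2: "integrable lborel (\<lambda>x. normal_density \<mu> \<sigma> x * (x - \<mu>) ^ 2)"
    using integrable_normal_moment[OF assms, of \<mu> 2] .
  have i0: "integrable lborel (\<lambda>x. normal_density \<mu> \<sigma> x * x)"
    using integrable_normal_moment_nz_1[OF assms] .
  show "integrable (gauss \<mu> \<sigma>) (\<lambda>y. y - \<mu>)"
    unfolding dens_measure_def using i1 by (subst integrable_density) auto
  show "integrable (gauss \<mu> \<sigma>) (\<lambda>y. (y - \<mu>)\<^sup>2)"
    unfolding dens_measure_def using i2 by (subst integrable_density) auto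
  show "integrable (gauss \<mu> \<sigma>) (\<lambda>y. y)"
    unfolding dens_measure_def using i0 by (subst integrable_density) auto
  have "integral\<^sup>L (gauss \<mu> \<sigma>) (\<lambda>y. y - \<mu>) = integral\<^sup>L lborel (\<lambda>x. normal_density \<mu> \<sigma> x * (x - \<mu>) ^ (2 * 0 + 1))"
    unfolding dens_measure_def by (subst integral_density) auto
  then show "integral\<^sup>L (gauss \<mu> \<sigma>) (\<lambda>y. y - \<mu>) = 0"
    using integral_normal_moment_odd[OF assms, of \<mu> 0] by simp
  have "integral\<^sup>L (gauss \<mu> \<sigma>) (\<lambda>y. (y - \<mu>)\<^sup>2) = integral\<^sup>L lborel (\<lambda>x. normal_density \<mu> \<sigma> x * (x - \<mu>) ^ (2 * 1))"
    unfolding dens_measure_def by (subst integral_density) auto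
  then show "integral\<^sup>L (gauss \<mu> \<sigma>) (\<lambda>y. (y - \<mu>)\<^sup>2) = \<sigma>\<^sup>2"
    using integral_normal_moment_even[OF assms, of \<mu> 1] by simp
  have "integral\<^sup>L (gauss \<mu> \<sigma>) (\<lambda>y. y) = integral\<^sup>L lborel (\<lambda>x. normal_density \<mu> \<sigma> x * x)"
    unfolding dens_measure_def by (subst integral_density) auto
  then show "integral\<^sup>L (gauss \<mu> \<sigma>) (\<lambda>y. y) = \<mu>"
    using integral_normal_moment_nz_1[OF assms] by simp
qed

lemma measure_gauss_UNIV: "\<sigma> > 0 \<Longrightarrow> measure (gauss \<mu> \<sigma>) UNIV = 1"
  using prob_space.prob_space[OF prob_space_gauss[of \<sigma> \<mu>]] by simp

lemma dvar_normal_density: "\<sigma> > 0 \<Longrightarrow> dvar (normal_density 0 \<sigma>) = \<sigma>\<^sup>2"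
  using gauss_moments[of \<sigma> 0] by (simp add: dvar_def mvar_def)

context
  fixes I :: "'i set" and \<mu> \<sigma> :: "'i \<Rightarrow> real"
  assumes I: "finite I" and sig: "\<And>i. \<sigma> i > 0"
begin

interpretation S: product_prob_space "\<lambda>i. gauss (\<mu> i) (\<sigma> i)" by (rule product_prob_space_gauss) (rule sig)

lemma gauss_prod_integral_component:
  fixes g :: "real \<Rightarrow> real"
  assumes i: "i \<in> I" and g: "integrable (gauss (\<mu> i) (\<sigma> i)) g"
  shows "integrable (gauss_prod I \<mu> \<sigma>) (\<lambda>x. g (x i))"
    and "integral\<^sup>L (gauss_prod I \<mu> \<sigma>) (\<lambda>x. g (x i)) = integral\<^sup>L (gauss (\<mu> i) (\<sigma> i)) g"
proof -
  have [measurable]: "g \<in> borel_measurable (gauss (\<mu> i) (\<sigma> i))" using g by auto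
  have comp: "(\<lambda>x. x i) \<in> gauss_prod I \<mu> \<sigma> \<rightarrow>\<^sub>M gauss (\<mu> i) (\<sigma> i)"
    using i by (rule measurable_component_singleton)
  show "integrable (gauss_prod I \<mu> \<sigma>) (\<lambda>x. g (x i))"
    using g integrable_distr_eq[OF comp, of g] by (simp add: S.PiM_component[OF i])
  show "integral\<^sup>L (gauss_prod I \<mu> \<sigma>) (\<lambda>x. g (x i)) = integral\<^sup>L (gauss (\<mu> i) (\<sigma> i)) g"
    using integral_distr[OF comp, of g] by (simp add: S.PiM_component[OF i])
qed

lemma gauss_prod_integral_components:
  fixes g h :: "real \<Rightarrow> real"
  assumes i: "i \<in> I" and k: "k \<in> I" and ik: "i \<noteq> k"
    and g: "integrable (gauss (\<mu> i) (\<sigma> i)) g" and h: "integrable (gauss (\<mu> k) (\<sigma> k)) h"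
  shows "integrable (gauss_prod I \<mu> \<sigma>) (\<lambda>x. g (x i) * h (x k))"
    "integral\<^sup>L (gauss_prod I \<mu> \<sigma>) (\<lambda>x. g (x i) * h (x k))
      = integral\<^sup>L (gauss (\<mu> i) (\<sigma> i)) g * integral\<^sup>L (gauss (\<mu> k) (\<sigma> k)) h"
proof -
  define f where "f j = (if j = i then g else if j = k then h else (\<lambda>_. 1::real))" for j
  have fi: "integrable (gauss (\<mu> j) (\<sigma> j)) (f j)" for j
    using g h S.M.integrable_const by (auto simp: f_def)
  have pe: "(\<Prod>j\<in>I. F j) = F i * F k" if "\<And>j. j \<noteq> i \<Longrightarrow> j \<noteq> k \<Longrightarrow> F j = 1" for F :: "'i \<Rightarrow> real"
  proof -
    have "(\<Prod>j\<in>I. F j) = F i * (\<Prod>j\<in>I - {i}. F j)" using I i by (simp add: prod.remove)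
    also have "(\<Prod>j\<in>I - {i}. F j) = F k * (\<Prod>j\<in>I - {i} - {k}. F j)" using I k ik by (subst prod.remove) auto
    also have "(\<Prod>j\<in>I - {i} - {k}. F j) = 1" using that by (intro prod.neutral) auto
    finally show ?thesis by simp
  qed
  have eq: "(\<Prod>j\<in>I. f j (x j)) = g (x i) * h (x k)" for x
    using ik by (subst pe) (auto simp: f_def)
  show "integrable (gauss_prod I \<mu> \<sigma>) (\<lambda>x. g (x i) * h (x k))"
    using S.product_integrable_prod[OF I fi] by (simp add: eq)
  have "integral\<^sup>L (gauss_prod I \<mu> \<sigma>) (\<lambda>x. g (x i) * h (x k)) = (\<Prod>j\<in>I. integral\<^sup>L (gauss (\<mu> j) (\<sigma> j)) (f j))"
    using S.product_integral_prod[OF I fi] by (simp add: eq)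
  also have "\<dots> = integral\<^sup>L (gauss (\<mu> i) (\<sigma> i)) g * integral\<^sup>L (gauss (\<mu> k) (\<sigma> k)) h"
    using ik by (subst pe) (auto simp: f_def measure_gauss_UNIV sig)
  finally show "integral\<^sup>L (gauss_prod I \<mu> \<sigma>) (\<lambda>x. g (x i) * h (x k))
      = integral\<^sup>L (gauss (\<mu> i) (\<sigma> i)) g * integral\<^sup>L (gauss (\<mu> k) (\<sigma> k)) h" .
qed

lemma gauss_prod_centred_covariance:
  assumes i: "i \<in> I" and k: "k \<in> I"
  shows "integrable (gauss_prod I \<mu> \<sigma>) (\<lambda>x. (x i - \<mu> i) * (x k - \<mu> k))"
    and "integral\<^sup>L (gauss_prod I \<mu> \<sigma>) (\<lambda>x. (x i - \<mu> i) * (x k - \<mu> k)) = (if i = k then (\<sigma> i)\<^sup>2 else 0)"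
proof -
  note m = gauss_moments[OF sig]
  consider "i = k" | "i \<noteq> k" by blast
  then have "integrable (gauss_prod I \<mu> \<sigma>) (\<lambda>x. (x i - \<mu> i) * (x k - \<mu> k)) \<and>
      integral\<^sup>L (gauss_prod I \<mu> \<sigma>) (\<lambda>x. (x i - \<mu> i) * (x k - \<mu> k)) = (if i = k then (\<sigma> i)\<^sup>2 else 0)"
  proof cases
    case 1
    then show ?thesis
      using gauss_prod_integral_component[OF i m(3)] m(4) by (simp add: power2_eq_square)
  next
    case 2
    then show ?thesis
      using gauss_prod_integral_components[OF i k 2 m(1) m(1)] m(2) by simp
  qed
  then show "integrable (gauss_prod I \<mu> \<sigma>) (\<lambda>x. (x i - \<mu> i) * (x k - \<mu> k))"
    and "integral\<^sup>L (gauss_prod I \<mu> \<sigma>) (\<lambda>x. (x i - \<mu> i) * (x k - \<mu> k)) = (if i = k then (\<sigma> i)\<^sup>2 else 0)"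
    by simp_all
qed

lemma gauss_prod_linear_moments:
  fixes \<alpha> :: "'i \<Rightarrow> real"
  shows "integrable (gauss_prod I \<mu> \<sigma>) (\<lambda>x. \<Sum>i\<in>I. \<alpha> i * (x i - \<mu> i))"
    and "integral\<^sup>L (gauss_prod I \<mu> \<sigma>) (\<lambda>x. \<Sum>i\<in>I. \<alpha> i * (x i - \<mu> i)) = 0"
    and "integrable (gauss_prod I \<mu> \<sigma>) (\<lambda>x. (\<Sum>i\<in>I. \<alpha> i * (x i - \<mu> i))\<^sup>2)"
    and "integral\<^sup>L (gauss_prod I \<mu> \<sigma>) (\<lambda>x. (\<Sum>i\<in>I. \<alpha> i * (x i - \<mu> i))\<^sup>2) = (\<Sum>i\<in>I. (\<alpha> i)\<^sup>2 * (\<sigma> i)\<^sup>2)"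
proof -
  note m = gauss_moments[OF sig]
  note cov = gauss_prod_centred_covariance
  have coord: "integrable (gauss_prod I \<mu> \<sigma>) (\<lambda>x. x i - \<mu> i)"
    "integral\<^sup>L (gauss_prod I \<mu> \<sigma>) (\<lambda>x. x i - \<mu> i) = 0" if "i \<in> I" for i
    using gauss_prod_integral_component[OF that m(1)] m(2) by simp_all
  then show "integrable (gauss_prod I \<mu> \<sigma>) (\<lambda>x. \<Sum>i\<in>I. \<alpha> i * (x i - \<mu> i))"
    and "integral\<^sup>L (gauss_prod I \<mu> \<sigma>) (\<lambda>x. \<Sum>i\<in>I. \<alpha> i * (x i - \<mu> i)) = 0"
    by simp_all
  have sq: "(\<Sum>i\<in>I. \<alpha> i * (x i - \<mu> i))\<^sup>2 = (\<Sum>i\<in>I. \<Sum>k\<in>I. \<alpha> i * \<alpha> k * ((x i - \<mu> i) * (x k - \<mu> k)))"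
    for x by (simp add: power2_eq_square sum_product mult_ac)
  show "integrable (gauss_prod I \<mu> \<sigma>) (\<lambda>x. (\<Sum>i\<in>I. \<alpha> i * (x i - \<mu> i))\<^sup>2)"
    unfolding sq using cov(1) by simp
  have "integral\<^sup>L (gauss_prod I \<mu> \<sigma>) (\<lambda>x. (\<Sum>i\<in>I. \<alpha> i * (x i - \<mu> i))\<^sup>2)
      = (\<Sum>i\<in>I. \<Sum>k\<in>I. \<alpha> i * \<alpha> k * (if i = k then (\<sigma> i)\<^sup>2 else 0))"
    unfolding sq using cov by (simp add: Bochner_Integration.integral_sum)
  also have "\<dots> = (\<Sum>i\<in>I. \<Sum>k\<in>I. if i = k then (\<alpha> i)\<^sup>2 * (\<sigma> i)\<^sup>2 else 0)"
    by (intro sum.cong refl) (simp add: power2_eq_square)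
  also have "\<dots> = (\<Sum>i\<in>I. (\<alpha> i)\<^sup>2 * (\<sigma> i)\<^sup>2)"
    using I by simp
  finally show "integral\<^sup>L (gauss_prod I \<mu> \<sigma>) (\<lambda>x. (\<Sum>i\<in>I. \<alpha> i * (x i - \<mu> i))\<^sup>2)
      = (\<Sum>i\<in>I. (\<alpha> i)\<^sup>2 * (\<sigma> i)\<^sup>2)" .
qed

end

section \<open>Unbiased estimation\<close>

lemma nn_integral_bind_finite:
  fixes g :: "real \<Rightarrow> real"
  assumes M: "prob_space M" and K[measurable]: "K \<in> M \<rightarrow>\<^sub>M subprob_algebra borel"
    and g[measurable]: "g \<in> borel_measurable borel"
    and fin: "(\<integral>\<^sup>+y. ennreal (g y) \<partial>(M \<bind> K)) \<noteq> \<infinity>"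
  shows "AE x in M. (\<integral>\<^sup>+y. ennreal (g y) \<partial>K x) \<noteq> \<infinity>"
    and "integrable M (\<lambda>x. enn2real (\<integral>\<^sup>+y. ennreal (g y) \<partial>K x))"
    and "(\<integral>x. enn2real (\<integral>\<^sup>+y. ennreal (g y) \<partial>K x) \<partial>M) = enn2real (\<integral>\<^sup>+y. ennreal (g y) \<partial>(M \<bind> K))"
proof -
  define G where "G x = (\<integral>\<^sup>+y. ennreal (g y) \<partial>K x)" for x
  have [measurable]: "G \<in> borel_measurable M"
    unfolding G_def by (rule measurable_compose[OF K nn_integral_measurable_subprob_algebra]) measurable
  have bind: "(\<integral>\<^sup>+y. ennreal (g y) \<partial>(M \<bind> K)) = (\<integral>\<^sup>+x. G x \<partial>M)"
    unfolding G_def by (rule nn_integral_bind[OF _ K]) measurable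
  show ae: "AE x in M. (\<integral>\<^sup>+y. ennreal (g y) \<partial>K x) \<noteq> \<infinity>"
    using fin unfolding bind G_def by (intro nn_integral_PInf_AE) auto
  then have "(\<integral>\<^sup>+x. ennreal (enn2real (G x)) \<partial>M) = (\<integral>\<^sup>+x. G x \<partial>M)"
    by (intro nn_integral_cong_AE) (auto simp: G_def less_top)
  then show "integrable M (\<lambda>x. enn2real (\<integral>\<^sup>+y. ennreal (g y) \<partial>K x))"
    using fin by (intro integrableI_nonneg) (auto simp: bind G_def less_top)
  show "(\<integral>x. enn2real (\<integral>\<^sup>+y. ennreal (g y) \<partial>K x) \<partial>M) = enn2real (\<integral>\<^sup>+y. ennreal (g y) \<partial>(M \<bind> K))"
    unfolding bind G_def using ae
    by (intro enn2real_nn_integral_eq_integral[symmetric]) (auto simp: less_top)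
qed

lemma integral_bind_kernel:
  fixes f :: "real \<Rightarrow> real"
  assumes M: "prob_space M" and K[measurable]: "K \<in> M \<rightarrow>\<^sub>M subprob_algebra borel"
    and f[measurable]: "f \<in> borel_measurable borel" and int: "integrable (M \<bind> K) f"
  shows "AE x in M. integrable (K x) f"
    and "integrable M (\<lambda>x. integral\<^sup>L (K x) f)"
    and "integral\<^sup>L (M \<bind> K) f = (\<integral>x. integral\<^sup>L (K x) f \<partial>M)"
proof -
  interpret M: prob_space M by fact
  have "sets (K x) = sets borel" if "x \<in> space M" for x
    using measurable_space[OF K that] by (simp add: space_subprob_algebra)
  then have fK[measurable]: "x \<in> space M \<Longrightarrow> f \<in> borel_measurable (K x)" for x
    using measurable_cong_sets[OF _ refl] f by blast
  have fin: "(\<integral>\<^sup>+y. ennreal (f y) \<partial>(M \<bind> K)) \<noteq> \<infinity>" "(\<integral>\<^sup>+y. ennreal (- f y) \<partial>(M \<bind> K)) \<noteq> \<infinity>"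
    using int unfolding real_integrable_def by auto
  note pos = nn_integral_bind_finite[OF M K f fin(1)]
    and neg = nn_integral_bind_finite[OF M K borel_measurable_uminus[OF f] fin(2)]
  show ae: "AE x in M. integrable (K x) f"
    using pos(1) neg(1) AE_space by eventually_elim (auto simp: real_integrable_def fK)
  define Pos where "Pos x = enn2real (\<integral>\<^sup>+y. ennreal (f y) \<partial>K x)" for x
  define Neg where "Neg x = enn2real (\<integral>\<^sup>+y. ennreal (- f y) \<partial>K x)" for x
  have split: "AE x in M. integral\<^sup>L (K x) f = Pos x - Neg x"
    using ae by eventually_elim (simp add: real_lebesgue_integral_def Pos_def Neg_def)
  have "integrable M Pos" "integrable M Neg"
    using pos(2) neg(2) unfolding Pos_def[abs_def] Neg_def[abs_def] .
  then have "integrable M (\<lambda>x. Pos x - Neg x)" by simp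
  moreover have "(\<lambda>x. integral\<^sup>L (K x) f) \<in> borel_measurable M"
    by (rule measurable_compose[OF K integral_measurable_subprob_algebra]) measurable
  moreover have "AE x in M. Pos x - Neg x = integral\<^sup>L (K x) f"
    using split by (simp add: eq_commute)
  ultimately show "integrable M (\<lambda>x. integral\<^sup>L (K x) f)"
    by (rule integrable_cong_AE_imp)
  have "(\<integral>x. integral\<^sup>L (K x) f \<partial>M) = (\<integral>x. Pos x - Neg x \<partial>M)"
    by (rule integral_cong_AE) (use split \<open>integrable M Pos\<close> \<open>integrable M Neg\<close> in simp_all)
  also have "\<dots> = (\<integral>x. Pos x \<partial>M) - (\<integral>x. Neg x \<partial>M)"
    using pos(2) neg(2) by (simp add: Pos_def Neg_def)
  finally show "integral\<^sup>L (M \<bind> K) f = (\<integral>x. integral\<^sup>L (K x) f \<partial>M)"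
    using pos(3) neg(3) by (simp add: real_lebesgue_integral_def[OF int] Pos_def Neg_def)
qed

lemma mvar_eq_moments:
  fixes X :: "'a \<Rightarrow> real"
  assumes "prob_space M" "integrable M X" "integrable M (\<lambda>x. (X x)\<^sup>2)"
  shows "mvar M X = integral\<^sup>L M (\<lambda>x. (X x)\<^sup>2) - (integral\<^sup>L M X)\<^sup>2"
  using prob_space.variance_eq[OF assms] by (simp add: mvar_def)

lemma (in prob_space) square_expectation_le:
  fixes X :: "'a \<Rightarrow> real"
  assumes "X \<in> borel_measurable M" "integrable M (\<lambda>x. (X x)\<^sup>2)"
  shows "(expectation X)\<^sup>2 \<le> expectation (\<lambda>x. (X x)\<^sup>2)"
  using variance_positive[of X] variance_eq[of X] square_integrable_imp_integrable[OF assms] assms(2)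
  by simp

lemma kernel_mean_mvar_le:
  assumes Q: "prob_space Q" and K[measurable]: "K \<in> Q \<rightarrow>\<^sub>M prob_algebra borel"
    and sq: "integrable (Q \<bind> K) (\<lambda>y. y\<^sup>2)"
  defines "m \<equiv> \<lambda>u. \<integral>y. y \<partial>K u"
  shows "integrable Q (\<lambda>u. (m u)\<^sup>2)" and "mvar Q m \<le> mvar (Q \<bind> K) (\<lambda>y. y)"
proof -
  interpret Q: prob_space Q by fact
  have Ks[measurable]: "K \<in> Q \<rightarrow>\<^sub>M subprob_algebra borel" by (rule measurable_prob_algebraD[OF K])
  have prob_K: "prob_space (K u)" and sets_K: "sets (K u) = sets borel" if "u \<in> space Q" for u
    using measurable_space[OF K that] by (auto simp: space_prob_algebra)
  interpret E: prob_space "Q \<bind> K"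
    by (rule Q.prob_space_bind[OF AE_I2[OF prob_K] Ks])
  have "sets (Q \<bind> K) = sets borel"
    by (rule sets_bind[OF sets_kernel[OF Ks]]) (use Q.not_empty in auto)
  then have "(\<lambda>y. y) \<in> borel_measurable (Q \<bind> K)"
    by (rule measurable_ident_sets)
  then have int: "integrable (Q \<bind> K) (\<lambda>y. y)"
    using sq by (rule E.square_integrable_imp_integrable)
  have id_meas: "(\<lambda>y. y) \<in> borel_measurable borel" by simp
  note first = integral_bind_kernel[OF Q Ks id_meas int]
    and second = integral_bind_kernel[OF Q Ks borel_measurable_power[OF id_meas] sq]
  have "integrable Q m" using first(2) by (simp add: m_def)
  have [measurable]: "m \<in> borel_measurable Q"
    unfolding m_def by (rule measurable_compose[OF Ks integral_measurable_subprob_algebra]) simp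
  have jensen: "AE u in Q. (m u)\<^sup>2 \<le> (\<integral>y. y\<^sup>2 \<partial>K u)"
    using second(1) AE_space
  proof eventually_elim
    case (elim u)
    then show ?case
      using prob_space.square_expectation_le[OF prob_K[OF elim(2)], of "\<lambda>y. y"]
      unfolding measurable_cong_sets[OF sets_K[OF elim(2)] refl] by (simp add: m_def)
  qed
  show "integrable Q (\<lambda>u. (m u)\<^sup>2)"
  proof (rule Bochner_Integration.integrable_bound[OF second(2)])
    show "AE u in Q. norm ((m u)\<^sup>2) \<le> norm (\<integral>y. y\<^sup>2 \<partial>K u)"
      using jensen by eventually_elim simp
  qed simp
  then have "integral\<^sup>L Q (\<lambda>u. (m u)\<^sup>2) \<le> integral\<^sup>L (Q \<bind> K) (\<lambda>y. y\<^sup>2)"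
    using integral_mono_AE[OF _ second(2) jensen] second(3) by simp
  then show "mvar Q m \<le> mvar (Q \<bind> K) (\<lambda>y. y)"
    using mvar_eq_moments[OF Q \<open>integrable Q m\<close>] mvar_eq_moments[OF E.prob_space_axioms]
      first(2,3) int sq \<open>integrable Q (\<lambda>u. (m u)\<^sup>2)\<close>
    by (simp add: m_def)
qed

lemma integral_mult_square_le:
  fixes f g :: "'a \<Rightarrow> real"
  assumes "integrable M (\<lambda>x. (f x)\<^sup>2)" "integrable M (\<lambda>x. (g x)\<^sup>2)" "integrable M (\<lambda>x. f x * g x)"
    and pos: "integral\<^sup>L M (\<lambda>x. (g x)\<^sup>2) > 0"
  shows "(integral\<^sup>L M (\<lambda>x. f x * g x))\<^sup>2 \<le> integral\<^sup>L M (\<lambda>x. (f x)\<^sup>2) * integral\<^sup>L M (\<lambda>x. (g x)\<^sup>2)"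
proof -
  define A where "A = integral\<^sup>L M (\<lambda>x. (f x)\<^sup>2)"
  define B where "B = integral\<^sup>L M (\<lambda>x. (g x)\<^sup>2)"
  define C where "C = integral\<^sup>L M (\<lambda>x. f x * g x)"
  define l where "l = C / B"
  have "0 \<le> integral\<^sup>L M (\<lambda>x. (f x - l * g x)\<^sup>2)" by simp
  also have "(\<lambda>x. (f x - l * g x)\<^sup>2) = (\<lambda>x. (f x)\<^sup>2 - (2 * l) * (f x * g x) + l\<^sup>2 * (g x)\<^sup>2)"
    by (simp add: fun_eq_iff power2_eq_square algebra_simps)
  also have "integral\<^sup>L M \<dots> = A - 2 * l * C + l\<^sup>2 * B"
    using assms by (simp add: A_def B_def C_def)
  also have "\<dots> = A - C\<^sup>2 / B"
    using pos by (simp add: l_def B_def[symmetric] power2_eq_square field_simps)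
  finally show ?thesis
    using pos by (simp add: A_def[symmetric] B_def[symmetric] C_def[symmetric] field_simps)
qed

lemma hammersley_chapman_robbins:
  fixes Y W :: "'a \<Rightarrow> real"
  assumes "prob_space M"
    and Y: "integrable M Y" "integrable M (\<lambda>x. (Y x)\<^sup>2)"
    and W: "integrable M W" "integrable M (\<lambda>x. (W x)\<^sup>2)" "integral\<^sup>L M W = 1"
    and WY: "integrable M (\<lambda>x. W x * Y x)"
    and W2: "integral\<^sup>L M (\<lambda>x. (W x)\<^sup>2) > 1"
  shows "(integral\<^sup>L M (\<lambda>x. W x * Y x) - integral\<^sup>L M Y)\<^sup>2
    \<le> mvar M Y * (integral\<^sup>L M (\<lambda>x. (W x)\<^sup>2) - 1)"
proof -
  interpret prob_space M by fact
  define \<mu> where "\<mu> = integral\<^sup>L M Y"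
  have cov: "(\<lambda>x. (Y x - \<mu>) * (W x - 1)) = (\<lambda>x. W x * Y x - \<mu> * W x - Y x + \<mu>)"
    by (simp add: fun_eq_iff algebra_simps)
  have W_sq: "(\<lambda>x. (W x - 1)\<^sup>2) = (\<lambda>x. (W x)\<^sup>2 - 2 * W x + 1)"
    by (simp add: fun_eq_iff power2_eq_square algebra_simps)
  have Y_sq: "(\<lambda>x. (Y x - \<mu>)\<^sup>2) = (\<lambda>x. (Y x)\<^sup>2 - 2 * \<mu> * Y x + \<mu>\<^sup>2)"
    by (simp add: fun_eq_iff power2_eq_square algebra_simps)
  have ints: "integrable M (\<lambda>x. (Y x - \<mu>) * (W x - 1))" "integrable M (\<lambda>x. (W x - 1)\<^sup>2)"
      "integrable M (\<lambda>x. (Y x - \<mu>)\<^sup>2)"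
    unfolding cov W_sq Y_sq using Y W WY by auto
  have cov_eq: "integral\<^sup>L M (\<lambda>x. (Y x - \<mu>) * (W x - 1)) = integral\<^sup>L M (\<lambda>x. W x * Y x) - \<mu>"
    unfolding cov using Y W WY by (simp add: prob_space \<mu>_def)
  have W_var: "integral\<^sup>L M (\<lambda>x. (W x - 1)\<^sup>2) = integral\<^sup>L M (\<lambda>x. (W x)\<^sup>2) - 1"
    unfolding W_sq using W by (simp add: prob_space)
  have "(integral\<^sup>L M (\<lambda>x. (Y x - \<mu>) * (W x - 1)))\<^sup>2
      \<le> integral\<^sup>L M (\<lambda>x. (Y x - \<mu>)\<^sup>2) * integral\<^sup>L M (\<lambda>x. (W x - 1)\<^sup>2)"
    using ints W2 W_var by (intro integral_mult_square_le) auto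
  then show ?thesis
    unfolding cov_eq W_var by (simp add: mvar_def \<mu>_def)
qed

lemma reciprocal_le_of_exp_quotient_bound:
  fixes c m :: real
  assumes "c > 0" and bound: "\<And>x. x > 0 \<Longrightarrow> x / (exp (x * c) - 1) \<le> m"
  shows "1 / c \<le> m"
proof (rule tendsto_upperbound)
  have "((\<lambda>x. exp (x * c)) has_real_derivative c) (at 0)"
    by (auto intro!: derivative_eq_intros)
  then have "((\<lambda>x. (exp (x * c) - 1) / x) \<longlongrightarrow> c) (at_right 0)"
    by (auto simp: has_field_derivative_iff intro: tendsto_mono at_le)
  from tendsto_inverse[OF this] show "((\<lambda>x. x / (exp (x * c) - 1)) \<longlongrightarrow> 1 / c) (at_right 0)"
    using \<open>c > 0\<close> by (simp add: inverse_eq_divide)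
  show "\<forall>\<^sub>F x in at_right 0. x / (exp (x * c) - 1) \<le> m"
    using eventually_at_right_less[of 0] by eventually_elim (rule bound)
qed simp

section \<open>Optimality of ALG for Gaussian sensors\<close>

locale gaussian_gossip = gossip P \<sigma> \<sigma>N for P :: "nat \<Rightarrow> 's::finite \<Rightarrow> 's option" and \<sigma> \<sigma>N +
  fixes \<Phi> :: "'s \<Rightarrow> real \<Rightarrow> real" and N :: "real \<Rightarrow> real"
  assumes \<Phi>_gauss: "\<And>c. \<Phi> c = normal_density 0 (\<sigma> c)" and N_gauss: "N = normal_density 0 \<sigma>N"
begin

sublocale gossip_alg P \<sigma> \<sigma>N \<Phi> N
  by unfold_locales (simp_all add: \<Phi>_gauss N_gauss dvar_normal_density \<sigma>_pos \<sigma>N_pos)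

abbreviation opinion_measure :: "real \<Rightarrow> ('s \<Rightarrow> real) measure" where
  "opinion_measure \<tau> \<equiv> gauss_prod UNIV (\<lambda>_. \<tau>) \<sigma>"

abbreviation noise_measure :: "nat \<Rightarrow> ('s \<times> nat \<Rightarrow> real) measure" where
  "noise_measure t \<equiv> gauss_prod (UNIV \<times> {..<t}) (\<lambda>_. 0) (\<lambda>_. \<sigma>N)"

lemma base_eq_pair: "base \<Phi> N \<tau> t = opinion_measure \<tau> \<Otimes>\<^sub>M noise_measure t"
proof -
  have "(\<lambda>x. \<Phi> c (x - \<tau>)) = normal_density \<tau> (\<sigma> c)" for c
    by (simp add: \<Phi>_gauss normal_density_def fun_eq_iff)
  then show ?thesis by (simp add: base_def N_gauss)
qed

lemma prob_space_opinion_measure: "prob_space (opinion_measure \<tau>)"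
  using product_prob_space_gauss[of \<sigma> "\<lambda>_. \<tau>"] \<sigma>_pos by (simp add: prob_space_PiM prob_space_gauss)

lemma prob_space_noise_measure: "prob_space (noise_measure t)"
  using \<sigma>N_pos by (intro prob_space_PiM prob_space_gauss) auto

lemma measurable_initial[measurable]: "(\<lambda>\<omega>. fst \<omega> c) \<in> borel_measurable (base \<Phi> N \<tau> t)"
  unfolding base_eq_pair by (intro measurable_compose[OF measurable_fst] measurable_component_singleton) auto

lemma measurable_noise: "e \<in> UNIV \<times> {..<t} \<Longrightarrow> (\<lambda>\<omega>. snd \<omega> e) \<in> borel_measurable (base \<Phi> N \<tau> t)"
  unfolding base_eq_pair by (intro measurable_compose[OF measurable_snd] measurable_component_singleton) auto

definition translate :: "nat \<Rightarrow> ('s \<Rightarrow> real) \<Rightarrow> ('s \<times> nat \<Rightarrow> real) \<Rightarrow> 's omega \<Rightarrow> 's omega" where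
  "translate t cx cn \<omega> = ((\<lambda>c\<in>UNIV. fst \<omega> c + cx c), (\<lambda>e\<in>UNIV \<times> {..<t}. snd \<omega> e + cn e))"

lemma measurable_translate[measurable]: "translate t cx cn \<in> base \<Phi> N \<tau> t \<rightarrow>\<^sub>M base \<Phi> N \<tau>' t"
  unfolding base_eq_pair translate_def
  by (intro measurable_Pair measurable_compose[OF measurable_fst measurable_restrict_add]
      measurable_compose[OF measurable_snd measurable_restrict_add])

lemma distr_base_translate:
  "distr (base \<Phi> N \<tau> t) (base \<Phi> N \<tau> t) (translate t cx cn) =
     gauss_prod UNIV (\<lambda>c. \<tau> + cx c) \<sigma> \<Otimes>\<^sub>M gauss_prod (UNIV \<times> {..<t}) (\<lambda>e. 0 + cn e) (\<lambda>_. \<sigma>N)"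
proof -
  let ?X = "\<lambda>x. \<lambda>c\<in>UNIV. x c + cx c" and ?E = "\<lambda>y. \<lambda>e\<in>UNIV \<times> {..<t}. y e + cn e"
  have X: "distr (opinion_measure \<tau>) (opinion_measure \<tau>) ?X = gauss_prod UNIV (\<lambda>c. \<tau> + cx c) \<sigma>"
    by (rule distr_gauss_prod_add) (auto simp: \<sigma>_pos)
  have E: "distr (noise_measure t) (noise_measure t) ?E = gauss_prod (UNIV \<times> {..<t}) (\<lambda>e. 0 + cn e) (\<lambda>_. \<sigma>N)"
    by (rule distr_gauss_prod_add) (auto simp: \<sigma>N_pos)
  have "sigma_finite_measure (distr (noise_measure t) (noise_measure t) ?E)"
    unfolding E by (intro prob_space_imp_sigma_finite prob_space_PiM prob_space_gauss \<sigma>N_pos)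
  then have "distr (opinion_measure \<tau>) (opinion_measure \<tau>) ?X \<Otimes>\<^sub>M distr (noise_measure t) (noise_measure t) ?E
     = distr (opinion_measure \<tau> \<Otimes>\<^sub>M noise_measure t) (opinion_measure \<tau> \<Otimes>\<^sub>M noise_measure t)
         (\<lambda>(x, y). (?X x, ?E y))"
    by (intro pair_measure_distr measurable_restrict_add)
  then show ?thesis unfolding base_eq_pair translate_def X E by (simp add: case_prod_unfold)
qed

abbreviation coeff_translate :: "nat \<Rightarrow> 's \<Rightarrow> real \<Rightarrow> 's omega \<Rightarrow> 's omega" where
  "coeff_translate t a s \<equiv> translate t (\<lambda>c. s * opinion_coeff t a c) (\<lambda>e. s * noise_coeff t a e)"

definition likelihood_ratio :: "real \<Rightarrow> nat \<Rightarrow> 's \<Rightarrow> real \<Rightarrow> 's omega \<Rightarrow> real" where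
  "likelihood_ratio \<tau> t a s \<omega> = exp (s * score \<tau> t a \<omega> - s\<^sup>2 * fisher_info t a / 2)"

lemma measurable_score[measurable]: "score \<tau> t a \<in> borel_measurable (base \<Phi> N \<tau>' t)"
proof -
  note [measurable] = measurable_noise
  show ?thesis unfolding score_def by measurable
qed

lemma measurable_likelihood_ratio[measurable]: "likelihood_ratio \<tau> t a s \<in> borel_measurable (base \<Phi> N \<tau>' t)"
  unfolding likelihood_ratio_def by measurable

lemma likelihood_ratio_eq_exp_sum:
  "likelihood_ratio \<tau> t a s (x, y) = exp
     ((\<Sum>c\<in>UNIV. s * opinion_coeff t a c * (x c - \<tau>) / (\<sigma> c)\<^sup>2 - (s * opinion_coeff t a c)\<^sup>2 / (2 * (\<sigma> c)\<^sup>2))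
    + (\<Sum>e\<in>UNIV \<times> {..<t}. s * noise_coeff t a e * (y e - 0) / \<sigma>N\<^sup>2 - (s * noise_coeff t a e)\<^sup>2 / (2 * \<sigma>N\<^sup>2)))"
proof -
  have "s * opinion_coeff t a c * (x c - \<tau>) / (\<sigma> c)\<^sup>2 - (s * opinion_coeff t a c)\<^sup>2 / (2 * (\<sigma> c)\<^sup>2)
      = s * (opinion_coeff t a c * (x c - \<tau>) / (\<sigma> c)\<^sup>2) - s\<^sup>2 / 2 * ((opinion_coeff t a c)\<^sup>2 / (\<sigma> c)\<^sup>2)" for c
    by (simp add: power_mult_distrib)
  moreover have "s * noise_coeff t a e * (y e - 0) / \<sigma>N\<^sup>2 - (s * noise_coeff t a e)\<^sup>2 / (2 * \<sigma>N\<^sup>2)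
      = s * (noise_coeff t a e * y e / \<sigma>N\<^sup>2) - s\<^sup>2 / 2 * ((noise_coeff t a e)\<^sup>2 / \<sigma>N\<^sup>2)" for e
    by (simp add: power_mult_distrib)
  ultimately show ?thesis
    by (simp add: likelihood_ratio_def score_def fisher_info_def sum_subtractf sum_distrib_left
        algebra_simps add_divide_distrib sum_divide_distrib)
qed

lemma distr_base_translate_coeff:
  "distr (base \<Phi> N \<tau> t) (base \<Phi> N \<tau> t) (coeff_translate t a s)
     = density (base \<Phi> N \<tau> t) (\<lambda>\<omega>. ennreal (likelihood_ratio \<tau> t a s \<omega>))"
proof -
  define f1 where "f1 x = ennreal (exp (\<Sum>c\<in>UNIV. s * opinion_coeff t a c * (x c - \<tau>) / (\<sigma> c)\<^sup>2
      - (s * opinion_coeff t a c)\<^sup>2 / (2 * (\<sigma> c)\<^sup>2)))" for x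
  define f2 where "f2 y = ennreal (exp (\<Sum>e\<in>UNIV \<times> {..<t}. s * noise_coeff t a e * (y e - 0) / \<sigma>N\<^sup>2
      - (s * noise_coeff t a e)\<^sup>2 / (2 * \<sigma>N\<^sup>2)))" for y
  have [measurable]: "f1 \<in> borel_measurable (opinion_measure \<tau>)" "f2 \<in> borel_measurable (noise_measure t)"
    unfolding f1_def f2_def by (auto intro!: measurable_component_singleton)
  have d1: "gauss_prod UNIV (\<lambda>c. \<tau> + s * opinion_coeff t a c) \<sigma> = density (opinion_measure \<tau>) f1"
    unfolding f1_def by (rule gauss_prod_add_mean_density) (auto simp: \<sigma>_pos)
  have d2: "gauss_prod (UNIV \<times> {..<t}) (\<lambda>e. 0 + s * noise_coeff t a e) (\<lambda>_. \<sigma>N) = density (noise_measure t) f2"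
    unfolding f2_def by (rule gauss_prod_add_mean_density) (auto simp: \<sigma>N_pos)
  have "prob_space (gauss_prod (UNIV \<times> {..<t}) (\<lambda>e. 0 + s * noise_coeff t a e) (\<lambda>_. \<sigma>N))"
    by (intro prob_space_PiM prob_space_gauss \<sigma>N_pos)
  then have "sigma_finite_measure (density (noise_measure t) f2)"
    unfolding d2 by (rule prob_space_imp_sigma_finite)
  then have "density (opinion_measure \<tau>) f1 \<Otimes>\<^sub>M density (noise_measure t) f2
      = density (opinion_measure \<tau> \<Otimes>\<^sub>M noise_measure t) (\<lambda>(x, y). f1 x * f2 y)"
    using prob_space_imp_sigma_finite[OF prob_space_noise_measure]
    by (intro pair_measure_density) auto
  also have "\<dots> = density (base \<Phi> N \<tau> t) (\<lambda>\<omega>. ennreal (likelihood_ratio \<tau> t a s \<omega>))"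
    using measurable_likelihood_ratio[of \<tau> t a s \<tau>] unfolding base_eq_pair
    by (intro density_cong) (auto simp: f1_def f2_def likelihood_ratio_eq_exp_sum exp_add ennreal_mult)
  finally show ?thesis
    unfolding distr_base_translate d1 d2 .
qed

lemma score_moments:
  shows "integrable (base \<Phi> N \<tau> t) (score \<tau> t a)"
    and "integral\<^sup>L (base \<Phi> N \<tau> t) (score \<tau> t a) = 0"
    and "integrable (base \<Phi> N \<tau> t) (\<lambda>\<omega>. (score \<tau> t a \<omega>)\<^sup>2)"
    and "integral\<^sup>L (base \<Phi> N \<tau> t) (\<lambda>\<omega>. (score \<tau> t a \<omega>)\<^sup>2) = fisher_info t a"
proof -
  define F where "F x = (\<Sum>c\<in>UNIV. (opinion_coeff t a c / (\<sigma> c)\<^sup>2) * (x c - (\<lambda>_. \<tau>) c))" for x :: "'s \<Rightarrow> real"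
  define G where "G y = (\<Sum>e\<in>UNIV \<times> {..<t}. (noise_coeff t a e / \<sigma>N\<^sup>2) * (y e - (\<lambda>_. 0) e))" for y :: "'s \<times> nat \<Rightarrow> real"
  have eq: "score \<tau> t a = (\<lambda>\<omega>. F (fst \<omega>) + G (snd \<omega>))"
    by (simp add: fun_eq_iff score_def F_def G_def)
  note mF = gauss_prod_linear_moments[of UNIV \<sigma> "\<lambda>_. \<tau>" "\<lambda>c. opinion_coeff t a c / (\<sigma> c)\<^sup>2",
      OF _ \<sigma>_pos, folded F_def, simplified]
  note mG = gauss_prod_linear_moments[of "UNIV \<times> {..<t}" "\<lambda>_. \<sigma>N" "\<lambda>_. 0" "\<lambda>e. noise_coeff t a e / \<sigma>N\<^sup>2",
      OF _ \<sigma>N_pos, folded G_def, simplified]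
  note pm = pair_sum_moments[OF prob_space_opinion_measure prob_space_noise_measure mF(1,3,2) mG(1,3,2)]
  show "integrable (base \<Phi> N \<tau> t) (score \<tau> t a)" unfolding eq base_eq_pair by (rule pm(1))
  show "integral\<^sup>L (base \<Phi> N \<tau> t) (score \<tau> t a) = 0" unfolding eq base_eq_pair by (rule pm(2))
  show "integrable (base \<Phi> N \<tau> t) (\<lambda>\<omega>. (score \<tau> t a \<omega>)\<^sup>2)" unfolding eq base_eq_pair by (rule pm(3))
  have "integral\<^sup>L (base \<Phi> N \<tau> t) (\<lambda>\<omega>. (score \<tau> t a \<omega>)\<^sup>2)
      = (\<Sum>c\<in>UNIV. (opinion_coeff t a c / (\<sigma> c)\<^sup>2)\<^sup>2 * (\<sigma> c)\<^sup>2)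
        + (\<Sum>e\<in>UNIV \<times> {..<t}. (noise_coeff t a e / \<sigma>N\<^sup>2)\<^sup>2 * \<sigma>N\<^sup>2)"
    unfolding eq base_eq_pair pm(4) mF(4) mG(4) ..
  also have "\<dots> = fisher_info t a"
  proof -
    have "(opinion_coeff t a c / (\<sigma> c)\<^sup>2)\<^sup>2 * (\<sigma> c)\<^sup>2 = (opinion_coeff t a c)\<^sup>2 / (\<sigma> c)\<^sup>2" for c
      using \<sigma>_pos[of c] by (simp add: power2_eq_square field_simps)
    moreover have "(noise_coeff t a e / \<sigma>N\<^sup>2)\<^sup>2 * \<sigma>N\<^sup>2 = (noise_coeff t a e)\<^sup>2 / \<sigma>N\<^sup>2" for e
      using \<sigma>N_pos by (simp add: power2_eq_square field_simps)
    ultimately show ?thesis by (simp add: fisher_info_def)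
  qed
  finally show "integral\<^sup>L (base \<Phi> N \<tau> t) (\<lambda>\<omega>. (score \<tau> t a \<omega>)\<^sup>2) = fisher_info t a" .
qed

lemma base_add: "base \<Phi> N (\<tau> + s) t = distr (base \<Phi> N \<tau> t) (base \<Phi> N \<tau> t) (translate t (\<lambda>_. s) (\<lambda>_. 0))"
  unfolding distr_base_translate by (simp add: base_eq_pair)

lemma prob_space_base: "prob_space (base \<Phi> N \<tau> t)"
  unfolding base_eq_pair by (intro prob_space_pair prob_space_opinion_measure prob_space_noise_measure)

lemma X_alg_eq_score: "X_alg P \<Phi> N a t \<omega> = \<tau> + score \<tau> t a \<omega> / accuracy t a"
  unfolding X_alg_def by (rule alg_opinion_eq_score)

lemma X_alg_moments:
  shows "integrable (base \<Phi> N \<tau> t) (X_alg P \<Phi> N a t)"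
    "integral\<^sup>L (base \<Phi> N \<tau> t) (X_alg P \<Phi> N a t) = \<tau>"
    "integrable (base \<Phi> N \<tau> t) (\<lambda>\<omega>. (X_alg P \<Phi> N a t \<omega>)\<^sup>2)"
    "mvar (base \<Phi> N \<tau> t) (X_alg P \<Phi> N a t) = 1 / accuracy t a"
proof -
  interpret B: prob_space "base \<Phi> N \<tau> t" by (rule prob_space_base)
  note m = score_moments[of \<tau> t a]
  have eq: "X_alg P \<Phi> N a t = (\<lambda>\<omega>. \<tau> + score \<tau> t a \<omega> / accuracy t a)"
    by (simp add: fun_eq_iff X_alg_eq_score[of _ _ _ \<tau>])
  show i1: "integrable (base \<Phi> N \<tau> t) (X_alg P \<Phi> N a t)" unfolding eq using m by auto
  show e1: "integral\<^sup>L (base \<Phi> N \<tau> t) (X_alg P \<Phi> N a t) = \<tau>" unfolding eq using m by (simp add: B.prob_space)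
  have sq: "(\<tau> + score \<tau> t a \<omega> / accuracy t a)\<^sup>2
      = \<tau>\<^sup>2 + (2 * \<tau> / accuracy t a) * score \<tau> t a \<omega> + (1 / (accuracy t a)\<^sup>2) * (score \<tau> t a \<omega>)\<^sup>2" for \<omega>
    using accuracy_pos[of t a] by (simp add: power2_eq_square field_simps)
  show "integrable (base \<Phi> N \<tau> t) (\<lambda>\<omega>. (X_alg P \<Phi> N a t \<omega>)\<^sup>2)" unfolding eq sq using m by auto
  have "mvar (base \<Phi> N \<tau> t) (X_alg P \<Phi> N a t)
      = integral\<^sup>L (base \<Phi> N \<tau> t) (\<lambda>\<omega>. (1 / (accuracy t a)\<^sup>2) * (score \<tau> t a \<omega>)\<^sup>2)"
    unfolding mvar_def e1 by (simp add: eq power_divide)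
  also have "\<dots> = 1 / accuracy t a"
    using m(4) accuracy_pos[of t a] by (simp add: fisher_info_eq_accuracy power2_eq_square)
  finally show "mvar (base \<Phi> N \<tau> t) (X_alg P \<Phi> N a t) = 1 / accuracy t a" .
qed

lemma measurable_Dobs: "e \<in> history P t a \<Longrightarrow> (\<lambda>\<omega>. Dobs \<omega> e) \<in> borel_measurable (base \<Phi> N \<tau> t)"
proof -
  assume e: "e \<in> history P t a"
  obtain c d r where cdr: "e = (c, d, r)" by (cases e) auto
  have "(c, r) \<in> UNIV \<times> {..<t}" using history_subset_relevant[of c d r P t a] e cdr by auto
  note [measurable] = measurable_noise[OF this]
  show ?thesis unfolding cdr Dobs_def by simp
qed

lemma measurable_info[measurable]: "info P a t \<in> base \<Phi> N \<tau> t \<rightarrow>\<^sub>M info_space P a t"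
  unfolding info_def info_space_def
proof (intro measurable_Pair)
  show "(\<lambda>\<omega>. fst \<omega> a) \<in> borel_measurable (base \<Phi> N \<tau> t)" by simp
  show "(\<lambda>\<omega>. restrict (Dobs \<omega>) (history P t a)) \<in> base \<Phi> N \<tau> t \<rightarrow>\<^sub>M Pi\<^sub>M (history P t a) (\<lambda>_. borel)"
    by (intro measurable_restrict measurable_Dobs)
qed

lemma info_translate_coeff:
  "info P a t (coeff_translate t a s \<omega>) = info P a t (translate t (\<lambda>_. s) (\<lambda>_. 0) \<omega>)"
proof -
  have "Dobs (coeff_translate t a s \<omega>) e = Dobs (translate t (\<lambda>_. s) (\<lambda>_. 0) \<omega>) e"
    if e: "e \<in> history P t a" for e
  proof -
    obtain c d r where cdr: "e = (c, d, r)" by (cases e) auto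
    have r: "r < t" using history_subset_relevant[of c d r P t a] e cdr by auto
    have "opinion_coeff t a d - opinion_coeff t a c + noise_coeff t a (c, r) = 0"
      using history_coeff_balance[of c d r t a] e cdr by auto
    then have "s * (opinion_coeff t a d - opinion_coeff t a c + noise_coeff t a (c, r)) = 0" by simp
    then show ?thesis using r by (simp add: cdr Dobs_def translate_def algebra_simps)
  qed
  then have R: "restrict (Dobs (coeff_translate t a s \<omega>)) (history P t a)
      = restrict (Dobs (translate t (\<lambda>_. s) (\<lambda>_. 0) \<omega>)) (history P t a)"
    by (intro restrict_ext) auto
  have F: "fst (coeff_translate t a s \<omega>) a = fst (translate t (\<lambda>_. s) (\<lambda>_. 0) \<omega>) a"
    by (simp add: translate_def opinion_coeff_self)
  show ?thesis unfolding info_def R F ..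
qed

definition alg_estimate :: "nat \<Rightarrow> 's \<Rightarrow> real \<times> ('s \<times> 's \<times> nat \<Rightarrow> real) \<Rightarrow> real" where
  "alg_estimate t a u = fst u + (\<Sum>e\<in>history P t a. alg_coeff t a e * snd u e)"

lemma measurable_alg_estimate[measurable]: "alg_estimate t a \<in> borel_measurable (info_space P a t)"
proof -
  have [measurable]: "(\<lambda>u. snd u e) \<in> borel_measurable (info_space P a t)" if "e \<in> history P t a" for e
    unfolding info_space_def using that
    by (intro measurable_compose[OF measurable_snd] measurable_component_singleton) auto
  show ?thesis unfolding alg_estimate_def info_space_def by measurable
qed

lemma alg_estimate_info: "alg_estimate t a (info P a t \<omega>) = X_alg P \<Phi> N a t \<omega>"
  by (simp add: alg_estimate_def info_def X_alg_def alg_opinion_eq_history_sum)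

abbreviation info_law :: "real \<Rightarrow> nat \<Rightarrow> 's \<Rightarrow> (real \<times> ('s \<times> 's \<times> nat \<Rightarrow> real)) measure" where
  "info_law \<tau> t a \<equiv> distr (base \<Phi> N \<tau> t) (info_space P a t) (info P a t)"

lemma prob_space_info_law: "prob_space (info_law \<tau> t a)"
  by (rule prob_space.prob_space_distr[OF prob_space_base]) simp

lemma info_law_add:
  "info_law (\<tau> + s) t a
    = distr (density (base \<Phi> N \<tau> t) (\<lambda>\<omega>. ennreal (likelihood_ratio \<tau> t a s \<omega>))) (info_space P a t) (info P a t)"
proof -
  let ?B = "base \<Phi> N \<tau> t" and ?I = "info_space P a t"
  let ?U = "translate t (\<lambda>_. s) (\<lambda>_. 0)" and ?T = "coeff_translate t a s"
  have "info_law (\<tau> + s) t a = distr (distr ?B ?B ?U) ?I (info P a t)"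
    by (simp add: base_add)
  also have "\<dots> = distr ?B ?I (info P a t \<circ> ?U)"
    by (rule distr_distr) auto
  also have "\<dots> = distr ?B ?I (info P a t \<circ> ?T)"
    by (rule distr_cong) (auto simp: info_translate_coeff)
  also have "\<dots> = distr (distr ?B ?B ?T) ?I (info P a t)"
    by (rule distr_distr[symmetric]) auto
  also have "\<dots> = distr (density ?B (\<lambda>\<omega>. ennreal (likelihood_ratio \<tau> t a s \<omega>))) ?I (info P a t)"
    by (simp add: distr_base_translate_coeff)
  finally show ?thesis .
qed

lemma likelihood_ratio_nonneg: "likelihood_ratio \<tau> t a s \<omega> \<ge> 0" by (simp add: likelihood_ratio_def)

lemma likelihood_ratio_integral:
  shows "integrable (base \<Phi> N \<tau> t) (likelihood_ratio \<tau> t a s)"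
    and "integral\<^sup>L (base \<Phi> N \<tau> t) (likelihood_ratio \<tau> t a s) = 1"
proof -
  let ?B = "base \<Phi> N \<tau> t" and ?T = "coeff_translate t a s"
  interpret B: prob_space ?B by (rule prob_space_base)
  have "prob_space (distr ?B ?B ?T)" by (rule B.prob_space_distr) simp
  then have "emeasure (density ?B (\<lambda>\<omega>. ennreal (likelihood_ratio \<tau> t a s \<omega>))) (space ?B) = 1"
    using prob_space.emeasure_space_1 by (fastforce simp: distr_base_translate_coeff)
  then have nn: "(\<integral>\<^sup>+\<omega>. ennreal (likelihood_ratio \<tau> t a s \<omega>) \<partial>?B) = 1"
    by (simp add: emeasure_density)
  show "integrable ?B (likelihood_ratio \<tau> t a s)"
    by (rule integrableI_nonneg) (auto simp: likelihood_ratio_nonneg nn)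
  show "integral\<^sup>L ?B (likelihood_ratio \<tau> t a s) = 1"
    by (subst integral_eq_nn_integral) (auto simp: likelihood_ratio_nonneg nn)
qed

lemma likelihood_ratio_square:
  "(likelihood_ratio \<tau> t a s \<omega>)\<^sup>2 = exp (s\<^sup>2 * fisher_info t a) * likelihood_ratio \<tau> t a (2 * s) \<omega>"
proof -
  have "(likelihood_ratio \<tau> t a s \<omega>)\<^sup>2 = exp (2 * (s * score \<tau> t a \<omega> - s\<^sup>2 * fisher_info t a / 2))"
    by (simp add: likelihood_ratio_def power2_eq_square exp_add[symmetric])
  also have "\<dots> = exp (s\<^sup>2 * fisher_info t a + ((2 * s) * score \<tau> t a \<omega> - (2 * s)\<^sup>2 * fisher_info t a / 2))"
    by (simp add: algebra_simps power2_eq_square)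
  also have "\<dots> = exp (s\<^sup>2 * fisher_info t a) * exp ((2 * s) * score \<tau> t a \<omega> - (2 * s)\<^sup>2 * fisher_info t a / 2)"
    by (rule exp_add)
  finally show ?thesis by (simp only: likelihood_ratio_def)
qed

lemma likelihood_ratio_square_integral:
  shows "integrable (base \<Phi> N \<tau> t) (\<lambda>\<omega>. (likelihood_ratio \<tau> t a s \<omega>)\<^sup>2)"
    "integral\<^sup>L (base \<Phi> N \<tau> t) (\<lambda>\<omega>. (likelihood_ratio \<tau> t a s \<omega>)\<^sup>2) = exp (s\<^sup>2 * fisher_info t a)"
  using likelihood_ratio_integral[of \<tau> t a "2 * s"] by (simp_all add: likelihood_ratio_square)

lemma integral_info_law_add:
  assumes g[measurable]: "g \<in> borel_measurable (info_space P a t)"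
    and int: "integrable (info_law (\<tau> + s) t a) g"
  shows "integrable (base \<Phi> N \<tau> t) (\<lambda>\<omega>. likelihood_ratio \<tau> t a s \<omega> * g (info P a t \<omega>))"
    and "integral\<^sup>L (info_law (\<tau> + s) t a) g
      = (\<integral>\<omega>. likelihood_ratio \<tau> t a s \<omega> * g (info P a t \<omega>) \<partial>base \<Phi> N \<tau> t)"
proof -
  let ?D = "density (base \<Phi> N \<tau> t) (\<lambda>\<omega>. ennreal (likelihood_ratio \<tau> t a s \<omega>))"
  have info_D: "info P a t \<in> ?D \<rightarrow>\<^sub>M info_space P a t" by simp
  have "integrable ?D (\<lambda>\<omega>. g (info P a t \<omega>))"
    using int integrable_distr_eq[OF info_D g] by (simp add: info_law_add)
  then show "integrable (base \<Phi> N \<tau> t) (\<lambda>\<omega>. likelihood_ratio \<tau> t a s \<omega> * g (info P a t \<omega>))"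
    by (subst (asm) integrable_density) (auto simp: likelihood_ratio_nonneg)
  have "integral\<^sup>L (info_law (\<tau> + s) t a) g = integral\<^sup>L ?D (\<lambda>\<omega>. g (info P a t \<omega>))"
    using integral_distr[OF info_D g] by (simp add: info_law_add)
  also have "\<dots> = (\<integral>\<omega>. likelihood_ratio \<tau> t a s \<omega> * g (info P a t \<omega>) \<partial>base \<Phi> N \<tau> t)"
    by (subst integral_density) (auto simp: likelihood_ratio_nonneg)
  finally show "integral\<^sup>L (info_law (\<tau> + s) t a) g
      = (\<integral>\<omega>. likelihood_ratio \<tau> t a s \<omega> * g (info P a t \<omega>) \<partial>base \<Phi> N \<tau> t)" .
qed

lemma unbiased_info_mvar_ge:
  assumes g[measurable]: "g \<in> borel_measurable (info_space P a t)"
    and unbiased: "\<And>\<tau>'. integrable (info_law \<tau>' t a) g \<and> integral\<^sup>L (info_law \<tau>' t a) g = \<tau>'"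
    and sq: "integrable (info_law \<tau> t a) (\<lambda>u. (g u)\<^sup>2)"
  shows "1 / accuracy t a \<le> mvar (info_law \<tau> t a) g"
proof -
  let ?B = "base \<Phi> N \<tau> t" and ?Y = "\<lambda>\<omega>. g (info P a t \<omega>)"
  have info: "info P a t \<in> ?B \<rightarrow>\<^sub>M info_space P a t" by simp
  have g2: "(\<lambda>u. (g u)\<^sup>2) \<in> borel_measurable (info_space P a t)" by simp
  have Y: "integrable ?B ?Y" "integral\<^sup>L ?B ?Y = \<tau>" "integrable ?B (\<lambda>\<omega>. (?Y \<omega>)\<^sup>2)"
    using unbiased[of \<tau>] sq integrable_distr_eq[OF info g] integral_distr[OF info g]
      integrable_distr_eq[OF info g2] by simp_all
  have var: "mvar (info_law \<tau> t a) g = mvar ?B ?Y"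
    unfolding mvar_def using integral_distr[OF info g] by (simp add: integral_distr[OF info])
  have I_pos: "fisher_info t a > 0" using accuracy_pos by (simp add: fisher_info_eq_accuracy)
  have "x / (exp (x * fisher_info t a) - 1) \<le> mvar ?B ?Y" if "x > 0" for x
  proof -
    define s where "s = sqrt x"
    have x: "x = s\<^sup>2" using that by (simp add: s_def)
    note W = integral_info_law_add[OF g conjunct1[OF unbiased[of "\<tau> + s"]]]
    have "(\<tau> + s - \<tau>)\<^sup>2 \<le> mvar ?B ?Y * (exp (s\<^sup>2 * fisher_info t a) - 1)"
      using hammersley_chapman_robbins[OF prob_space_base Y(1,3) likelihood_ratio_integral(1)
          likelihood_ratio_square_integral(1) likelihood_ratio_integral(2) W(1)]
        W(2) unbiased[of "\<tau> + s"] Y(2) I_pos that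
      by (simp add: likelihood_ratio_square_integral(2) x)
    moreover have "exp (x * fisher_info t a) > 1" using that I_pos by simp
    ultimately show ?thesis by (simp add: x divide_le_eq)
  qed
  then show ?thesis
    using reciprocal_le_of_exp_quotient_bound[OF I_pos] by (simp add: var fisher_info_eq_accuracy)
qed

lemma unbiased_estimator_mvar_ge:
  assumes "unbiased_estimator \<Phi> N P a t K" and sq: "integrable (est_distr \<Phi> N P a t K \<tau>) (\<lambda>y. y\<^sup>2)"
  shows "1 / accuracy t a \<le> mvar (est_distr \<Phi> N P a t K \<tau>) (\<lambda>y. y)"
proof -
  have K[measurable]: "K \<in> info_space P a t \<rightarrow>\<^sub>M prob_algebra borel"
    and unbiased: "\<And>\<tau>'. integrable (info_law \<tau>' t a \<bind> K) (\<lambda>y. y)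
      \<and> integral\<^sup>L (info_law \<tau>' t a \<bind> K) (\<lambda>y. y) = \<tau>'"
    using assms(1) by (simp_all add: unbiased_estimator_def est_distr_def)
  have K_law: "K \<in> info_law \<tau>' t a \<rightarrow>\<^sub>M prob_algebra borel" for \<tau>'
    using K unfolding measurable_cong_sets[OF sets_distr refl] .
  define m where "m = (\<lambda>u. \<integral>y. y \<partial>K u)"
  have m[measurable]: "m \<in> borel_measurable (info_space P a t)"
    unfolding m_def
    by (rule measurable_compose[OF measurable_prob_algebraD[OF K] integral_measurable_subprob_algebra]) simp
  have "integrable (info_law \<tau>' t a) m \<and> integral\<^sup>L (info_law \<tau>' t a) m = \<tau>'" for \<tau>'
    using integral_bind_kernel[OF prob_space_info_law measurable_prob_algebraD[OF K_law] _
        conjunct1[OF unbiased[of \<tau>']]] unbiased[of \<tau>']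
    by (simp add: m_def)
  moreover note mean = kernel_mean_mvar_le[OF prob_space_info_law K_law sq[unfolded est_distr_def]]
  ultimately have "1 / accuracy t a \<le> mvar (info_law \<tau> t a) m"
    by (intro unbiased_info_mvar_ge[OF m]) (simp_all add: m_def)
  also have "\<dots> \<le> mvar (est_distr \<Phi> N P a t K \<tau>) (\<lambda>y. y)"
    using mean(2) by (simp add: est_distr_def m_def)
  finally show ?thesis .
qed

definition alg_kernel :: "nat \<Rightarrow> 's \<Rightarrow> real \<times> ('s \<times> 's \<times> nat \<Rightarrow> real) \<Rightarrow> real measure" where
  "alg_kernel t a u = return borel (alg_estimate t a u)"

lemma est_distr_alg_kernel:
  "est_distr \<Phi> N P a t (alg_kernel t a) \<tau> = distr (base \<Phi> N \<tau> t) borel (X_alg P \<Phi> N a t)"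
proof -
  let ?B = "base \<Phi> N \<tau> t"
  have "space (info_law \<tau> t a) \<noteq> {}"
    using prob_space.not_empty[OF prob_space_info_law] .
  then have "est_distr \<Phi> N P a t (alg_kernel t a) \<tau> = distr (info_law \<tau> t a) borel (alg_estimate t a)"
    unfolding est_distr_def alg_kernel_def by (rule bind_return_distr') simp
  also have "\<dots> = distr ?B borel (alg_estimate t a \<circ> info P a t)"
    by (rule distr_distr) simp_all
  also have "\<dots> = distr ?B borel (X_alg P \<Phi> N a t)"
    by (rule distr_cong) (auto simp: alg_estimate_info)
  finally show ?thesis .
qed

lemma alg_kernel_unbiased_mvar:
  shows "unbiased_estimator \<Phi> N P a t (alg_kernel t a)"
    and "integrable (est_distr \<Phi> N P a t (alg_kernel t a) \<tau>) (\<lambda>y. y\<^sup>2)"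
    and "mvar (est_distr \<Phi> N P a t (alg_kernel t a) \<tau>) (\<lambda>y. y) = 1 / accuracy t a"
proof -
  have X[measurable]: "X_alg P \<Phi> N a t \<in> borel_measurable (base \<Phi> N \<tau>' t)" for \<tau>'
    using X_alg_moments(1) by (rule borel_measurable_integrable)
  show "unbiased_estimator \<Phi> N P a t (alg_kernel t a)"
    unfolding unbiased_estimator_def est_distr_alg_kernel alg_kernel_def
    using X_alg_moments(1,2) by (simp add: integrable_distr_eq integral_distr measurable_return_prob_space)
  show "integrable (est_distr \<Phi> N P a t (alg_kernel t a) \<tau>) (\<lambda>y. y\<^sup>2)"
    unfolding est_distr_alg_kernel using X_alg_moments(3) by (simp add: integrable_distr_eq)
  show "mvar (est_distr \<Phi> N P a t (alg_kernel t a) \<tau>) (\<lambda>y. y) = 1 / accuracy t a"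
    unfolding est_distr_alg_kernel mvar_def using X_alg_moments(2,4)
    by (simp add: integral_distr mvar_def)
qed

theorem mvar_X_alg_eq_Vopt: "mvar (base \<Phi> N \<tau> t) (X_alg P \<Phi> N a t) = Vopt \<Phi> N P \<tau> a t"
proof -
  let ?S = "{mvar (est_distr \<Phi> N P a t K \<tau>) (\<lambda>y. y) | K.
    unbiased_estimator \<Phi> N P a t K \<and> integrable (est_distr \<Phi> N P a t K \<tau>) (\<lambda>y. y\<^sup>2)}"
  have "1 / accuracy t a \<in> ?S"
    using alg_kernel_unbiased_mvar by (auto intro!: exI[of _ "alg_kernel t a"])
  moreover have "\<And>v. v \<in> ?S \<Longrightarrow> 1 / accuracy t a \<le> v"
    by (auto intro: unbiased_estimator_mvar_ge)
  ultimately have "Vopt \<Phi> N P \<tau> a t = 1 / accuracy t a"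
    unfolding Vopt_def by (intro cInf_eq_minimum)
  then show ?thesis using X_alg_moments(4) by simp
qed

end

theorem corollary2:
  fixes F :: "(real \<Rightarrow> real) set"
    and N :: "real \<Rightarrow> real"
    and \<Phi> :: "'s::finite \<Rightarrow> real \<Rightarrow> real"
    and P :: "nat \<Rightarrow> 's \<Rightarrow> 's option"
    and \<tau> :: real and a :: 's and t :: nat
  assumes "finite F" and "N \<in> F"
    and gaussian: "\<forall>\<phi>\<in>F. \<exists>\<sigma>>0. \<phi> = normal_density 0 \<sigma>"
    and "\<forall>c. \<Phi> c \<in> F"
    and "meeting_pattern P" and "independent_pattern P"
  shows "mvar (base \<Phi> N \<tau> t) (X_alg P \<Phi> N a t) = Vopt \<Phi> N P \<tau> a t"
proof -
  have "\<forall>c. \<exists>\<sigma>. \<sigma> > 0 \<and> \<Phi> c = normal_density 0 \<sigma>"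
    using gaussian \<open>\<forall>c. \<Phi> c \<in> F\<close> by blast
  then obtain \<sigma> where \<sigma>: "\<And>c. \<sigma> c > 0 \<and> \<Phi> c = normal_density 0 (\<sigma> c)"
    by metis
  obtain \<sigma>N where \<sigma>N: "\<sigma>N > 0" "N = normal_density 0 \<sigma>N"
    using gaussian \<open>N \<in> F\<close> by blast
  interpret gaussian_gossip P \<sigma> \<sigma>N \<Phi> N
    by unfold_locales (use \<sigma> \<sigma>N \<open>independent_pattern P\<close> in auto)
  show ?thesis by (rule mvar_X_alg_eq_Vopt)
qed

end
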